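(* Let $V\subseteq\mathcal{B}(H)$ be an operator system with unit $e$ and let $\varepsilon\ge1$. Let $V_\varepsilon^+=\{v\in V_h:v\ge\|v\|\frac{\varepsilon-1}{\varepsilon+1}e\}$. Then $V_\varepsilon^+$ is a unital cone and $S(V_\varepsilon^+)=S_\varepsilon=A_\varepsilon$, where $S_\varepsilon=\{\varphi\in V^\ast:\varphi=\varphi^\ast,\ \varphi(e)=1,\ \|\varphi\|\le\varepsilon\}$ and $A_\varepsilon=\{(1+s)\phi-s\psi:\phi,\psi\in S(V_+),\ 0\le s\le\frac{\varepsilon-1}{2}\}$.
   Context: An operator system is a self-adjoint subspace of $\mathcal{B}(H)$ containing the identity $e$; $V_h$ denotes hermitian elements, $V_+=V\cap\mathcal{B}(H)_+$, and $\le$ is the operator order. $\varphi^\ast$ is defined by $\langle x,\varphi^\ast\rangle=\overline{\langle x^\ast,\varphi\rangle}$. A cone $\mathfrak{c}\subseteq V_h$ is unital if for every $v\in V_h$ there is $r\ge0$ with $v+re\in\mathfrak{c}$. For a cone $\mathfrak{c}$, $S(\mathfrak{c})$ is the set of linear functionals $\varphi$ with $\varphi(\mathfrak{c})\ge0$ and $\varphi(e)=1$. *)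

theory Defs
  imports "HOL-Analysis.Analysis"
begin

class complex_vector = real_vector +
  fixes scaleC :: "complex \<Rightarrow> 'a \<Rightarrow> 'a" (infixr \<open>*\<^sub>C\<close> 75)
  assumes scaleC_add_right: "a *\<^sub>C (x + y) = a *\<^sub>C x + a *\<^sub>C y"
    and scaleC_add_left: "(a + b) *\<^sub>C x = a *\<^sub>C x + b *\<^sub>C x"
    and scaleC_scaleC: "a *\<^sub>C (b *\<^sub>C x) = (a * b) *\<^sub>C x"
    and scaleC_one: "1 *\<^sub>C x = x"
    and scaleR_scaleC: "r *\<^sub>R x = complex_of_real r *\<^sub>C x"

class complex_inner = complex_vector + real_normed_vector +
  fixes cinner :: "'a \<Rightarrow> 'a \<Rightarrow> complex"
  assumes cinner_commute: "cinner x y = cnj (cinner y x)"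
    and cinner_add_right: "cinner x (y + z) = cinner x y + cinner x z"
    and cinner_scaleC_right: "cinner x (a *\<^sub>C y) = a * cinner x y"
    and cinner_self_norm: "cinner x x = complex_of_real ((norm x)\<^sup>2)"

class chilbert_space = complex_inner + complete_space

instantiation complex :: complex_vector
begin
definition scaleC_complex :: "complex \<Rightarrow> complex \<Rightarrow> complex" where
  "scaleC_complex a x = a * x"
instance
proof
  fix a b :: complex and x y :: complex and r :: real
  show "a *\<^sub>C (x + y) = a *\<^sub>C x + a *\<^sub>C y" by (simp add: scaleC_complex_def distrib_left)
  show "(a + b) *\<^sub>C x = a *\<^sub>C x + b *\<^sub>C x" by (simp add: scaleC_complex_def distrib_right)
  show "a *\<^sub>C (b *\<^sub>C x) = (a * b) *\<^sub>C x" by (simp add: scaleC_complex_def mult.assoc)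
  show "1 *\<^sub>C x = x" by (simp add: scaleC_complex_def)
  show "r *\<^sub>R x = complex_of_real r *\<^sub>C x" by (simp add: scaleC_complex_def scaleR_conv_of_real)
qed
end

instantiation complex :: complex_inner
begin
definition cinner_complex :: "complex \<Rightarrow> complex \<Rightarrow> complex" where
  "cinner_complex x y = cnj x * y"
instance
proof
  fix x y z a :: complex
  show "cinner x y = cnj (cinner y x)" by (simp add: cinner_complex_def mult.commute)
  show "cinner x (y + z) = cinner x y + cinner x z" by (simp add: cinner_complex_def distrib_left)
  show "cinner x (a *\<^sub>C y) = a * cinner x y" by (simp add: cinner_complex_def scaleC_complex_def mult.left_commute)
  show "cinner x x = complex_of_real ((norm x)\<^sup>2)" using complex_norm_square[of x] by (simp add: cinner_complex_def mult.commute)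
qed
end

instance complex :: chilbert_space ..

definition clinear :: "('a::complex_vector \<Rightarrow> 'a) \<Rightarrow> bool" where
  "clinear T \<longleftrightarrow> (\<forall>x y. T (x + y) = T x + T y) \<and> (\<forall>c x. T (c *\<^sub>C x) = c *\<^sub>C T x)"

definition BH :: "('h::chilbert_space \<Rightarrow> 'h) set" where
  "BH = {T. clinear T \<and> (\<exists>K. \<forall>x. norm (T x) \<le> norm x * K)}"

definition cadjoint :: "('h::chilbert_space \<Rightarrow> 'h) \<Rightarrow> ('h \<Rightarrow> 'h)" where
  "cadjoint T = (THE S. \<forall>x y. cinner (T x) y = cinner x (S y))"

definition pos_op :: "('h::chilbert_space \<Rightarrow> 'h) \<Rightarrow> bool" where
  "pos_op T \<longleftrightarrow> (\<forall>x. Im (cinner x (T x)) = 0 \<and> 0 \<le> Re (cinner x (T x)))"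

definition BH_pos :: "('h::chilbert_space \<Rightarrow> 'h) set" where
  "BH_pos = {T \<in> BH. pos_op T}"

definition op_le :: "('h::chilbert_space \<Rightarrow> 'h) \<Rightarrow> ('h \<Rightarrow> 'h) \<Rightarrow> bool" where
  "op_le S T \<longleftrightarrow> pos_op (\<lambda>x. T x - S x)"

definition operator_system :: "('h::chilbert_space \<Rightarrow> 'h) set \<Rightarrow> bool" where
  "operator_system V \<longleftrightarrow> V \<subseteq> BH \<and> id \<in> V
     \<and> (\<forall>S\<in>V. \<forall>T\<in>V. (\<lambda>x. S x + T x) \<in> V)
     \<and> (\<forall>c. \<forall>T\<in>V. (\<lambda>x. c *\<^sub>C T x) \<in> V)
     \<and> (\<forall>T\<in>V. cadjoint T \<in> V)"

definition herm :: "('h::chilbert_space \<Rightarrow> 'h) set \<Rightarrow> ('h \<Rightarrow> 'h) set" where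
  "herm V = {v \<in> V. cadjoint v = v}"

definition Vpos :: "('h::chilbert_space \<Rightarrow> 'h) set \<Rightarrow> ('h \<Rightarrow> 'h) set" where
  "Vpos V = V \<inter> BH_pos"

text \<open>Linear functionals on V (represented as functions vanishing off V).\<close>
definition lin_func :: "('h::chilbert_space \<Rightarrow> 'h) set \<Rightarrow> (('h \<Rightarrow> 'h) \<Rightarrow> complex) \<Rightarrow> bool" where
  "lin_func V \<phi> \<longleftrightarrow> (\<forall>S\<in>V. \<forall>T\<in>V. \<phi> (\<lambda>x. S x + T x) = \<phi> S + \<phi> T)
     \<and> (\<forall>c. \<forall>T\<in>V. \<phi> (\<lambda>x. c *\<^sub>C T x) = c * \<phi> T)
     \<and> (\<forall>T. T \<notin> V \<longrightarrow> \<phi> T = 0)"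

definition dual :: "('h::chilbert_space \<Rightarrow> 'h) set \<Rightarrow> (('h \<Rightarrow> 'h) \<Rightarrow> complex) set" where
  "dual V = {\<phi>. lin_func V \<phi> \<and> (\<exists>K. \<forall>v\<in>V. cmod (\<phi> v) \<le> K * onorm v)}"

definition fnorm :: "('h::chilbert_space \<Rightarrow> 'h) set \<Rightarrow> (('h \<Rightarrow> 'h) \<Rightarrow> complex) \<Rightarrow> real" where
  "fnorm V \<phi> = Sup {cmod (\<phi> v) | v. v \<in> V \<and> onorm v \<le> 1}"

definition fstar :: "('h::chilbert_space \<Rightarrow> 'h) set \<Rightarrow> (('h \<Rightarrow> 'h) \<Rightarrow> complex) \<Rightarrow> (('h \<Rightarrow> 'h) \<Rightarrow> complex)" where
  "fstar V \<phi> = (\<lambda>T. if T \<in> V then cnj (\<phi> (cadjoint T)) else 0)"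

definition is_cone :: "('h::chilbert_space \<Rightarrow> 'h) set \<Rightarrow> ('h \<Rightarrow> 'h) set \<Rightarrow> bool" where
  "is_cone V c \<longleftrightarrow> c \<subseteq> herm V
     \<and> (\<forall>a\<in>c. \<forall>b\<in>c. (\<lambda>x. a x + b x) \<in> c)
     \<and> (\<forall>r::real. r \<ge> 0 \<longrightarrow> (\<forall>a\<in>c. (\<lambda>x. r *\<^sub>R a x) \<in> c))"

definition unital_cone :: "('h::chilbert_space \<Rightarrow> 'h) set \<Rightarrow> ('h \<Rightarrow> 'h) set \<Rightarrow> bool" where
  "unital_cone V c \<longleftrightarrow> is_cone V c
     \<and> (\<forall>v\<in>herm V. \<exists>r::real. r \<ge> 0 \<and> (\<lambda>x. v x + r *\<^sub>R id x) \<in> c)"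

definition states :: "('h::chilbert_space \<Rightarrow> 'h) set \<Rightarrow> ('h \<Rightarrow> 'h) set \<Rightarrow> (('h \<Rightarrow> 'h) \<Rightarrow> complex) set" where
  "states V c = {\<phi>. lin_func V \<phi> \<and> (\<forall>v\<in>c. Im (\<phi> v) = 0 \<and> 0 \<le> Re (\<phi> v)) \<and> \<phi> id = 1}"

definition Veps :: "('h::chilbert_space \<Rightarrow> 'h) set \<Rightarrow> real \<Rightarrow> ('h \<Rightarrow> 'h) set" where
  "Veps V \<epsilon> = {v \<in> herm V. op_le (\<lambda>x. (onorm v * ((\<epsilon> - 1) / (\<epsilon> + 1))) *\<^sub>R id x) v}"

definition Seps :: "('h::chilbert_space \<Rightarrow> 'h) set \<Rightarrow> real \<Rightarrow> (('h \<Rightarrow> 'h) \<Rightarrow> complex) set" where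
  "Seps V \<epsilon> = {\<phi> \<in> dual V. fstar V \<phi> = \<phi> \<and> \<phi> id = 1 \<and> fnorm V \<phi> \<le> \<epsilon>}"

definition Aeps :: "('h::chilbert_space \<Rightarrow> 'h) set \<Rightarrow> real \<Rightarrow> (('h \<Rightarrow> 'h) \<Rightarrow> complex) set" where
  "Aeps V \<epsilon> = {(\<lambda>T. complex_of_real (1 + s) * \<phi> T - complex_of_real s * \<psi> T) | \<phi> \<psi> s.
      \<phi> \<in> states V (Vpos V) \<and> \<psi> \<in> states V (Vpos V) \<and> 0 \<le> s \<and> s \<le> (\<epsilon> - 1) / 2}"

end

theory Submission
  imports Defs "HOL-Library.Function_Algebras"
begin

text \<open>
  A functional that is positive on \<open>V\<^sub>\<epsilon>\<^sup>+\<close> is bounded by \<open>\<epsilon>\<close> on hermitian elements,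
  since \<open>h + \<epsilon>\<parallel>h\<parallel>e \<in> V\<^sub>\<epsilon>\<^sup>+\<close>; a hermitian functional is then bounded by \<open>\<epsilon>\<close> after
  rotating by a phase. Conversely, for \<open>v \<in> V\<^sub>\<epsilon>\<^sup>+\<close> the numerical range lies in
  \<open>[c\<parallel>v\<parallel>, \<parallel>v\<parallel>]\<close> with \<open>c = (\<epsilon> - 1)/(\<epsilon> + 1)\<close>; subtracting its centre leaves an operator of norm
  \<open>(1 - c)\<parallel>v\<parallel>/2\<close>, and \<open>\<parallel>\<phi>\<parallel> \<le> \<epsilon>\<close> gives exactly \<open>\<phi>(v) \<ge> 0\<close>. The inclusion \<open>A\<^sub>\<epsilon> \<subseteq> S\<^sub>\<epsilon>\<close> is
  the triangle inequality.

  For \<open>S\<^sub>\<epsilon> \<subseteq> A\<^sub>\<epsilon>\<close>, put \<open>M = (1 + \<epsilon>)/2\<close>: the previous estimate shows \<open>Re \<phi>(b) \<le> M t\<close>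
  whenever \<open>0 \<le> b \<le> t e\<close>, so the gauge \<open>p(v) = inf {M t - Re \<phi>(b) | 0 \<le> b, v + b \<le> t e}\<close> is
  a finite sublinear functional on \<open>V\<^sub>h\<close>. A linear functional below \<open>p\<close> (Hahn--Banach) is a
  positive majorant \<open>G \<ge> \<phi>\<close> with \<open>G(e) = M\<close>, and \<open>\<phi> = M (G/M) - s ((G - \<phi>)/s)\<close> with
  \<open>s = (\<epsilon> - 1)/2\<close> is the required decomposition. Hahn--Banach is derived from Zorn's lemma
  via a minimal sublinear functional, and the existence of adjoints from the Riesz
  representation theorem.
\<close>

lemma scaleC_zero_right [simp]: "a *\<^sub>C 0 = 0"
  using scaleC_add_right[of a 0 0] by simp

lemma scaleC_zero_left [simp]: "0 *\<^sub>C x = 0"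
  using scaleC_add_left[of 0 0 x] by simp

lemma scaleC_minus_right: "a *\<^sub>C (- x) = - (a *\<^sub>C x)"
  using scaleC_add_right[of a "- x" x] by (simp add: eq_neg_iff_add_eq_0)

lemma scaleC_minus_left: "(- a) *\<^sub>C x = - (a *\<^sub>C x)"
  using scaleC_add_left[of "- a" a x] by (simp add: eq_neg_iff_add_eq_0)

lemma scaleC_diff_right: "a *\<^sub>C (x - y) = a *\<^sub>C x - a *\<^sub>C y"
  using scaleC_add_right[of a x "- y"] by (simp add: scaleC_minus_right)

lemma cinner_add_left: "cinner (x + y) z = cinner x z + cinner y z"
  by (metis cinner_add_right cinner_commute complex_cnj_add)

lemma cinner_scaleC_left: "cinner (a *\<^sub>C x) y = cnj a * cinner x y"
  by (metis cinner_commute cinner_scaleC_right complex_cnj_mult)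

lemma cinner_zero_right [simp]: "cinner x 0 = 0"
  using cinner_add_right[of x 0 0] by simp

lemma cinner_zero_left [simp]: "cinner 0 x = 0"
  by (simp add: cinner_commute[of 0 x])

lemma cinner_minus_right: "cinner x (- y) = - cinner x y"
  using cinner_add_right[of x "- y" y] by (simp add: eq_neg_iff_add_eq_0)

lemma cinner_minus_left: "cinner (- x) y = - cinner x y"
  by (metis cinner_commute cinner_minus_right complex_cnj_minus)

lemma cinner_diff_right: "cinner x (y - z) = cinner x y - cinner x z"
  using cinner_add_right[of x y "- z"] by (simp add: cinner_minus_right)

lemma cinner_diff_left: "cinner (x - y) z = cinner x z - cinner y z"
  using cinner_add_left[of x "- y" z] by (simp add: cinner_minus_left)

lemma cinner_scaleR_right: "cinner x (r *\<^sub>R y) = complex_of_real r * cinner x y"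
  by (simp add: scaleR_scaleC cinner_scaleC_right)

lemma cinner_scaleR_left: "cinner (r *\<^sub>R x) y = complex_of_real r * cinner x y"
  by (simp add: scaleR_scaleC cinner_scaleC_left)

lemma cinner_self_eq_0: "cinner x x = 0 \<longleftrightarrow> x = 0"
  by (simp add: cinner_self_norm)

lemma cinner_ext: "(\<And>z. cinner z x = cinner z y) \<Longrightarrow> x = y"
  by (metis cinner_diff_right cinner_self_eq_0 right_minus_eq)

lemma norm_scaleC:
  fixes x :: "'a::complex_inner"
  shows "norm (a *\<^sub>C x) = cmod a * norm x"
proof -
  have "(norm (a *\<^sub>C x))\<^sup>2 = Re ((cnj a * a) * cinner x x)"
    by (metis cinner_scaleC_left cinner_scaleC_right cinner_self_norm mult.assoc Re_complex_of_real)
  also have "\<dots> = (cmod a * norm x)\<^sup>2"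
    by (simp add: cinner_self_norm complex_mult_cnj mult.commute cmod_power2 power_mult_distrib)
  finally show ?thesis
    by (simp add: power2_eq_iff_nonneg)
qed

lemma Re_cinner_self: "Re (cinner x x) = (norm x)\<^sup>2"
  by (simp add: cinner_self_norm)

lemma norm_add_power2:
  fixes x :: "'a::complex_inner"
  shows "(norm (x + y))\<^sup>2 = (norm x)\<^sup>2 + (norm y)\<^sup>2 + 2 * Re (cinner x y)"
proof -
  have "cinner (x + y) (x + y) = cinner x x + cinner y y + (cinner x y + cnj (cinner x y))"
    by (simp add: cinner_add_left cinner_add_right cinner_commute[of y x])
  then show ?thesis
    by (metis Re_cinner_self plus_complex.sel(1) complex_cnj_add cnj.sel(1) mult_2)
qed

lemma parallelogram_law:
  fixes x :: "'a::complex_inner"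
  shows "(norm (x + y))\<^sup>2 + (norm (x - y))\<^sup>2 = 2 * (norm x)\<^sup>2 + 2 * (norm y)\<^sup>2"
  using norm_add_power2[of x y] norm_add_power2[of x "- y"] by (simp add: cinner_minus_right)

lemma cinner_cauchy_schwarz:
  fixes x :: "'a::complex_inner"
  shows "cmod (cinner x y) \<le> norm x * norm y"
proof (cases "y = 0")
  case False
  define n c where "n = (norm y)\<^sup>2" and "c = cinner y x"
  have n: "n > 0"
    using False by (simp add: n_def)
  have "cinner (x - (c / n) *\<^sub>C y) (x - (c / n) *\<^sub>C y)
      = cinner x x - cnj c * c / n - c * cnj c / n + cnj c * c / n * cinner y y / n"
    by (simp add: cinner_diff_left cinner_diff_right cinner_scaleC_left cinner_scaleC_right
        cinner_commute[of x y] c_def algebra_simps)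
  also have "\<dots> = cinner x x - complex_of_real ((cmod c)\<^sup>2 / n)"
    using n by (simp add: cinner_self_norm[of y] n_def complex_mult_cnj cmod_power2 mult.commute)
      (simp add: field_simps)
  finally have "(norm (x - (c / n) *\<^sub>C y))\<^sup>2 = (norm x)\<^sup>2 - (cmod c)\<^sup>2 / n"
    by (metis Re_complex_of_real Re_cinner_self minus_complex.sel(1))
  then have "(cmod c)\<^sup>2 / n \<le> (norm x)\<^sup>2"
    by (metis diff_ge_0_iff_ge zero_le_power2)
  then have "(cmod c)\<^sup>2 \<le> (norm x * norm y)\<^sup>2"
    using n by (simp add: n_def field_simps power_mult_distrib)
  then have "cmod c \<le> norm x * norm y"
    by (rule power2_le_imp_le) simp
  then show ?thesis
    by (metis c_def cinner_commute complex_mod_cnj)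
qed simp

section \<open>The Riesz representation theorem\<close>

lemma minimizing_sequence_Cauchy:
  fixes X :: "nat \<Rightarrow> 'a::complex_inner"
  assumes X: "\<And>n. X n \<in> A" and D_le: "\<And>x. x \<in> A \<Longrightarrow> D \<le> (norm x)\<^sup>2"
    and X_norm: "\<And>n. (norm (X n))\<^sup>2 < D + 1 / real (Suc n)"
    and midpoint: "\<And>x y. x \<in> A \<Longrightarrow> y \<in> A \<Longrightarrow> (1/2) *\<^sub>R (x + y) \<in> A"
  shows "Cauchy X"
proof (rule metric_CauchyI)
  have X_dist: "(norm (X m - X n))\<^sup>2 \<le> 2 / real (Suc m) + 2 / real (Suc n)" for m n
  proof -
    have "D \<le> (norm ((1/2) *\<^sub>R (X m + X n)))\<^sup>2"
      by (intro D_le midpoint X)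
    then have "4 * D \<le> (norm (X m + X n))\<^sup>2"
      by (simp add: power_mult_distrib power2_eq_square)
    then show ?thesis
      using parallelogram_law[of "X m" "X n"] X_norm[of m] X_norm[of n] by linarith
  qed
  fix e :: real
  assume "e > 0"
  then obtain M where M: "inverse (real (Suc M)) < e\<^sup>2 / 4"
    using reals_Archimedean[of "e\<^sup>2 / 4"] by auto
  have "dist (X m) (X n) < e" if "m \<ge> M" "n \<ge> M" for m n
  proof -
    have "1 / real (Suc m) \<le> inverse (real (Suc M))" "1 / real (Suc n) \<le> inverse (real (Suc M))"
      using that by (simp_all add: inverse_eq_divide frac_le)
    then have "(norm (X m - X n))\<^sup>2 < e\<^sup>2"
      using X_dist[of m n] M by linarith
    then show ?thesis
      using \<open>e > 0\<close> by (simp add: dist_norm power_less_imp_less_base)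
  qed
  then show "\<exists>M. \<forall>m\<ge>M. \<forall>n\<ge>M. dist (X m) (X n) < e"
    by blast
qed

lemma min_norm_point_exists:
  fixes A :: "'a::chilbert_space set"
  assumes "closed A" and "A \<noteq> {}"
    and midpoint: "\<And>x y. x \<in> A \<Longrightarrow> y \<in> A \<Longrightarrow> (1/2) *\<^sub>R (x + y) \<in> A"
  shows "\<exists>z\<in>A. \<forall>x\<in>A. norm z \<le> norm x"
proof -
  define D where "D = Inf ((\<lambda>x. (norm x)\<^sup>2) ` A)"
  have D_le: "D \<le> (norm x)\<^sup>2" if "x \<in> A" for x
    unfolding D_def using that by (intro cInf_lower bdd_belowI[of _ 0]) auto
  have "\<exists>x\<in>A. (norm x)\<^sup>2 < D + 1 / real (Suc n)" for n
    using cInf_lessD[of "(\<lambda>x. (norm x)\<^sup>2) ` A" "D + 1 / real (Suc n)"] assms(2)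
    by (auto simp: D_def)
  then obtain X where X: "\<And>n. X n \<in> A" and X_norm: "\<And>n. (norm (X n))\<^sup>2 < D + 1 / real (Suc n)"
    by metis
  then obtain z where lim: "X \<longlonglongrightarrow> z"
    using minimizing_sequence_Cauchy[OF X D_le X_norm midpoint] Cauchy_convergent_iff convergent_def
    by blast
  have "z \<in> A"
    using \<open>closed A\<close> X lim closed_sequential_limits by blast
  moreover have "(norm z)\<^sup>2 \<le> D"
  proof (rule tendsto_le[OF sequentially_bot])
    show "(\<lambda>n. (norm (X n))\<^sup>2) \<longlonglongrightarrow> (norm z)\<^sup>2"
      by (intro tendsto_intros lim)
    show "(\<lambda>n. D + 1 / real (Suc n)) \<longlonglongrightarrow> D"
      using tendsto_add[OF tendsto_const[of D] LIMSEQ_inverse_real_of_nat]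
      by (simp add: inverse_eq_divide)
    show "\<forall>\<^sub>F n in sequentially. (norm (X n))\<^sup>2 \<le> D + 1 / real (Suc n)"
      using X_norm less_imp_le by (intro always_eventually allI) blast
  qed
  ultimately show ?thesis
    using D_le by (metis norm_ge_zero order_trans power2_le_imp_le)
qed

lemma min_norm_point_orthogonal:
  fixes l :: "'a::complex_inner \<Rightarrow> complex"
  assumes add: "\<And>x y. l (x + y) = l x + l y" and scale: "\<And>c x. l (c *\<^sub>C x) = c * l x"
    and z: "l z = 1" and min: "\<And>x. l x = 1 \<Longrightarrow> norm z \<le> norm x" and k: "l k = 0"
  shows "cinner z k = 0"
proof -
  define c s where "c = cinner z k" and "s = 1 / ((norm k)\<^sup>2 + 1)"
  have "(norm k)\<^sup>2 + 1 > 0"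
    by (simp add: add_nonneg_pos)
  then have s: "s > 0" "s * (norm k)\<^sup>2 < 1"
    by (simp_all add: s_def divide_less_eq)
  define t where "t = - complex_of_real s * cnj c"
  have "(norm z)\<^sup>2 \<le> (norm (z + t *\<^sub>C k))\<^sup>2"
    using min[of "z + t *\<^sub>C k"] by (simp add: add scale z k power_mono)
  also have "\<dots> = (norm z)\<^sup>2 + (cmod t)\<^sup>2 * (norm k)\<^sup>2 + 2 * Re (t * c)"
    by (simp add: norm_add_power2 norm_scaleC cinner_scaleC_right c_def power_mult_distrib)
  also have "Re (t * c) = - s * (cmod c)\<^sup>2"
    unfolding cmod_power2 by (simp add: t_def algebra_simps power2_eq_square)
  also have "(cmod t)\<^sup>2 = s\<^sup>2 * (cmod c)\<^sup>2"
    using s by (simp add: t_def norm_mult power_mult_distrib)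
  finally have "0 \<le> s * (cmod c)\<^sup>2 * (s * (norm k)\<^sup>2 - 2)"
    by (simp add: algebra_simps power2_eq_square)
  then have "s * (cmod c)\<^sup>2 \<le> 0"
    using s by (smt (verit) mult_pos_neg)
  then show ?thesis
    using s by (simp add: c_def mult_le_0_iff)
qed

theorem riesz_representation:
  fixes l :: "'a::chilbert_space \<Rightarrow> complex"
  assumes add: "\<And>x y. l (x + y) = l x + l y" and scale: "\<And>c x. l (c *\<^sub>C x) = c * l x"
    and bounded: "\<And>x. cmod (l x) \<le> norm x * K"
  shows "\<exists>z. \<forall>x. l x = cinner z x"
proof (cases "\<exists>x. l x \<noteq> 0")
  case True
  then obtain x1 where "l x1 \<noteq> 0"
    by blast
  then have A_nonempty: "l ((1 / l x1) *\<^sub>C x1) = 1"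
    by (simp add: scale)
  have "bounded_linear l"
    by (rule bounded_linear_intro[of _ K])
      (simp_all add: add scaleR_scaleC scale scaleC_complex_def bounded)
  then have "closed {x. l x = 1}"
    by (intro closed_Collect_eq continuous_on_const linear_continuous_on)
  moreover have "l ((1/2) *\<^sub>R (x + y)) = 1" if "l x = 1" "l y = 1" for x y
    using that by (simp add: scaleR_scaleC scale add)
  ultimately obtain z where z: "l z = 1" and min: "\<And>x. l x = 1 \<Longrightarrow> norm z \<le> norm x"
    using min_norm_point_exists[of "{x. l x = 1}"] A_nonempty by blast
  define n where "n = (norm z)\<^sup>2"
  have "z \<noteq> 0"
    using z scale[of 0 0] by auto
  then have n: "n > 0"
    by (simp add: n_def)
  have "cinner z x = l x * complex_of_real n" for x
  proof -
    have "l (x - l x *\<^sub>C z) = 0"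
      using add[of "x - l x *\<^sub>C z" "l x *\<^sub>C z"] by (simp add: scale z)
    then have "cinner z (x - l x *\<^sub>C z) = 0"
      using min_norm_point_orthogonal[of l z, OF add scale z min] by blast
    then show ?thesis
      by (simp add: cinner_diff_right cinner_scaleC_right cinner_self_norm n_def)
  qed
  then have "l x = cinner ((1 / complex_of_real n) *\<^sub>C z) x" for x
    using n by (simp add: cinner_scaleC_left)
  then show ?thesis
    by blast
qed (metis cinner_zero_left)

lemma BH_add: "T \<in> BH \<Longrightarrow> T (x + y) = T x + T y"
  by (simp add: BH_def clinear_def)

lemma BH_scaleC: "T \<in> BH \<Longrightarrow> T (c *\<^sub>C x) = c *\<^sub>C T x"
  by (simp add: BH_def clinear_def)

lemma BH_bounded_linear:
  assumes "T \<in> BH"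
  shows "bounded_linear T"
proof -
  obtain K where "\<And>x. norm (T x) \<le> norm x * K"
    using assms by (auto simp: BH_def)
  then show ?thesis
    by (intro bounded_linear_intro[of _ K]) (simp_all add: assms BH_add BH_scaleC scaleR_scaleC)
qed

lemma BH_diff: "T \<in> BH \<Longrightarrow> T (x - y) = T x - T y"
  by (rule linear_simps(2)[OF BH_bounded_linear])

lemma norm_BH_le: "T \<in> BH \<Longrightarrow> norm (T x) \<le> onorm T * norm x"
  by (rule onorm[OF BH_bounded_linear])

lemma onorm_BH_nonneg: "T \<in> BH \<Longrightarrow> 0 \<le> onorm T"
  by (rule onorm_pos_le[OF BH_bounded_linear])

lemma onorm_add_scaled_id_le: "T \<in> BH \<Longrightarrow> onorm (\<lambda>x. T x + r *\<^sub>R x) \<le> onorm T + \<bar>r\<bar>"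
  by (rule onorm_bound) (simp_all add: onorm_BH_nonneg norm_triangle_le norm_BH_le distrib_right)

lemma onorm_scaleC_le: "T \<in> BH \<Longrightarrow> onorm (\<lambda>x. c *\<^sub>C T x) \<le> cmod c * onorm T"
  by (rule onorm_bound)
    (simp_all add: onorm_BH_nonneg norm_scaleC mult.assoc mult_left_mono norm_BH_le)

lemma cadjoint_eqI:
  fixes T S :: "'h::chilbert_space \<Rightarrow> 'h"
  assumes "\<And>x y. cinner (T x) y = cinner x (S y)"
  shows "cadjoint T = S"
  unfolding cadjoint_def
proof (rule the_equality)
  fix S'
  assume "\<forall>x y. cinner (T x) y = cinner x (S' y)"
  then show "S' = S"
    using assms by (metis cinner_ext ext)
qed (use assms in blast)

lemma cinner_cadjoint:
  fixes T :: "'h::chilbert_space \<Rightarrow> 'h"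
  assumes T: "T \<in> BH"
  shows "cinner (T x) y = cinner x (cadjoint T y)"
proof -
  obtain K where K: "\<And>x. norm (T x) \<le> norm x * K"
    using T by (auto simp: BH_def)
  have "\<exists>z. \<forall>x. cinner y (T x) = cinner z x" for y
  proof (rule riesz_representation[of _ "norm y * K"])
    show "cmod (cinner y (T x)) \<le> norm x * (norm y * K)" for x
      using cinner_cauchy_schwarz[of y "T x"] mult_left_mono[OF K[of x], of "norm y"]
      by (simp add: algebra_simps)
  qed (simp_all add: BH_add[OF T] BH_scaleC[OF T] cinner_add_right cinner_scaleC_right)
  then obtain S where S: "\<And>y x. cinner y (T x) = cinner (S y) x"
    by metis
  then have "\<And>x y. cinner (T x) y = cinner x (S y)"
    by (metis cinner_commute)
  moreover from this have "cadjoint T = S"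
    by (rule cadjoint_eqI)
  ultimately show ?thesis
    by simp
qed

lemma cadjoint_id: "cadjoint (\<lambda>x::'h::chilbert_space. x) = (\<lambda>x. x)"
  by (rule cadjoint_eqI) simp

definition qform :: "('h::chilbert_space \<Rightarrow> 'h) \<Rightarrow> 'h \<Rightarrow> real" where
  "qform T u = Re (cinner u (T u))"

lemma qform_add: "qform (\<lambda>x. S x + T x) u = qform S u + qform T u"
  by (simp add: qform_def cinner_add_right)

lemma qform_minus: "qform (\<lambda>x. - T x) u = - qform T u"
  by (simp add: qform_def cinner_minus_right)

lemma qform_scaleR: "qform (\<lambda>x. r *\<^sub>R T x) u = r * qform T u"
  by (simp add: qform_def cinner_scaleR_right)

lemma qform_zero: "qform (\<lambda>x. 0) u = 0"
  by (simp add: qform_def)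

lemma qform_id: "qform (\<lambda>x. x) u = (norm u)\<^sup>2"
  by (simp add: qform_def Re_cinner_self)

lemma qform_scaled_id: "qform (\<lambda>x. r *\<^sub>R x) u = r * (norm u)\<^sup>2"
  by (simp add: qform_def cinner_scaleR_right Re_cinner_self)

lemma abs_qform_le:
  assumes "T \<in> BH"
  shows "\<bar>qform T u\<bar> \<le> onorm T * (norm u)\<^sup>2"
proof -
  have "\<bar>qform T u\<bar> \<le> norm u * norm (T u)"
    unfolding qform_def by (metis abs_Re_le_cmod cinner_cauchy_schwarz order_trans)
  also have "\<dots> \<le> norm u * (onorm T * norm u)"
    by (intro mult_left_mono norm_BH_le assms) simp
  finally show ?thesis
    by (simp add: power2_eq_square algebra_simps)
qed

text \<open>The imaginary parts of the off-diagonal terms of the forms at \<open>x + y\<close> and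
  \<open>x + \<i> y\<close> are those of \<open>\<langle>x, T y\<rangle> + \<langle>y, T x\<rangle>\<close> and \<open>\<i> (\<langle>x, T y\<rangle> - \<langle>y, T x\<rangle>)\<close>.\<close>
lemma cinner_symmetric_if_form_real:
  assumes T: "T \<in> BH" and real: "\<And>u. Im (cinner u (T u)) = 0"
  shows "cinner (T x) y = cinner x (T y)"
proof -
  have "Im (cinner x (T y) + cinner y (T x)) = 0"
    using real[of "x + y"] real[of x] real[of y]
    by (simp add: BH_add[OF T] cinner_add_left cinner_add_right)
  moreover have "Re (cinner x (T y) - cinner y (T x)) = 0"
    using real[of "x + \<i> *\<^sub>C y"] real[of x] real[of y]
    by (simp add: BH_add[OF T] BH_scaleC[OF T] cinner_add_left cinner_add_right
        cinner_scaleC_left cinner_scaleC_right)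
  ultimately show ?thesis
    by (simp add: complex_eq_iff cinner_commute[of "T x" y])
qed

lemma onorm_le_if_abs_qform_le:
  assumes T: "T \<in> BH" and sym: "\<And>x y. cinner (T x) y = cinner x (T y)"
    and a: "a \<ge> 0" and bound: "\<And>u. \<bar>qform T u\<bar> \<le> a * (norm u)\<^sup>2"
  shows "onorm T \<le> a"
proof (rule onorm_bound[OF a])
  fix x
  show "norm (T x) \<le> a * norm x"
  proof (cases "T x = 0")
    case False
    define y where "y = (norm x / norm (T x)) *\<^sub>R T x"
    have "x \<noteq> 0"
      using False linear_simps(3)[OF BH_bounded_linear[OF T]] by auto
    have norm_y: "norm y = norm x"
      using False by (simp add: y_def)
    have "qform T (x + y) - qform T (x - y) = 2 * Re (cinner x (T y)) + 2 * Re (cinner y (T x))"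
      by (simp add: qform_def BH_add[OF T] BH_diff[OF T] cinner_add_left cinner_add_right
          cinner_diff_left cinner_diff_right)
    also have "Re (cinner x (T y)) = Re (cinner y (T x))"
      by (simp add: sym[symmetric] cinner_commute[of "T x" y])
    also have "Re (cinner y (T x)) = norm x * norm (T x)"
      using False by (simp add: y_def cinner_scaleR_left Re_cinner_self power2_eq_square)
    finally have "4 * (norm x * norm (T x)) \<le> a * (norm (x + y))\<^sup>2 + a * (norm (x - y))\<^sup>2"
      using bound[of "x + y"] bound[of "x - y"] by (simp add: abs_le_iff)
    also have "\<dots> = 4 * (norm x * (a * norm x))"
      using parallelogram_law[of x y] norm_y
      by (simp add: distrib_left[symmetric] power2_eq_square algebra_simps)
    finally show ?thesis
      using \<open>x \<noteq> 0\<close> by simp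
  qed (simp add: a)
qed

section \<open>Linear functionals dominated by sublinear ones\<close>

definition sublinear_on :: "'a::real_vector set \<Rightarrow> ('a \<Rightarrow> real) \<Rightarrow> bool" where
  "sublinear_on X q \<longleftrightarrow>
     (\<forall>x\<in>X. \<forall>y\<in>X. q (x + y) \<le> q x + q y) \<and> (\<forall>x\<in>X. \<forall>t\<ge>0. q (t *\<^sub>R x) \<le> t * q x)"

lemma sublinear_on_addD: "sublinear_on X q \<Longrightarrow> x \<in> X \<Longrightarrow> y \<in> X \<Longrightarrow> q (x + y) \<le> q x + q y"
  by (simp add: sublinear_on_def)

lemma sublinear_on_scaleD: "sublinear_on X q \<Longrightarrow> x \<in> X \<Longrightarrow> t \<ge> 0 \<Longrightarrow> q (t *\<^sub>R x) \<le> t * q x"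
  by (simp add: sublinear_on_def)

lemma sublinear_on_zero:
  assumes "subspace X" and "sublinear_on X q"
  shows "q 0 = 0"
  using sublinear_on_scaleD[OF assms(2) subspace_0[OF assms(1)], of 0]
    sublinear_on_addD[OF assms(2) subspace_0[OF assms(1)] subspace_0[OF assms(1)]] by simp

lemma sublinear_on_scaleR:
  assumes X: "subspace X" and q: "sublinear_on X q" and "x \<in> X" and "t \<ge> 0"
  shows "q (t *\<^sub>R x) = t * q x"
proof (cases "t = 0")
  case False
  have "q x = q ((1 / t) *\<^sub>R (t *\<^sub>R x))"
    using False by simp
  also have "\<dots> \<le> (1 / t) * q (t *\<^sub>R x)"
    using assms by (intro sublinear_on_scaleD[OF q] subspace_scale) simp_all
  finally show ?thesis
    using sublinear_on_scaleD[OF q \<open>x \<in> X\<close> \<open>t \<ge> 0\<close>] False \<open>t \<ge> 0\<close>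
    by (simp add: field_simps)
qed (simp add: sublinear_on_zero[OF X q])

lemma sublinear_on_uminus:
  assumes X: "subspace X" and q: "sublinear_on X q" and "x \<in> X"
  shows "- q (- x) \<le> q x"
  using sublinear_on_addD[OF q \<open>x \<in> X\<close> subspace_neg[OF X \<open>x \<in> X\<close>]]
    sublinear_on_zero[OF X q] by simp

lemma le_cInf_add_cInf:
  fixes A B :: "real set"
  assumes "A \<noteq> {}" and "B \<noteq> {}" and "\<And>a b. a \<in> A \<Longrightarrow> b \<in> B \<Longrightarrow> c \<le> a + b"
  shows "c \<le> Inf A + Inf B"
proof -
  have "c - b \<le> Inf A" if "b \<in> B" for b
    using assms(1,3) that by (intro cInf_greatest) (auto simp: algebra_simps)
  then have "c - Inf A \<le> b" if "b \<in> B" for b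
    using that by (simp add: algebra_simps)
  then have "c - Inf A \<le> Inf B"
    using assms(2) by (intro cInf_greatest) auto
  then show ?thesis
    by simp
qed

lemma le_scaled_cInf:
  fixes A :: "real set"
  assumes "A \<noteq> {}" and "s > 0" and "\<And>a. a \<in> A \<Longrightarrow> c \<le> s * a"
  shows "c \<le> s * Inf A"
proof -
  have "c / s \<le> Inf A"
    using assms by (intro cInf_greatest) (auto simp: field_simps)
  then show ?thesis
    using assms(2) by (simp add: field_simps)
qed

lemma sublinear_on_Inf:
  assumes X: "subspace X"
    and nonempty: "\<And>x. x \<in> X \<Longrightarrow> S x \<noteq> {}" and bdd: "\<And>x. x \<in> X \<Longrightarrow> bdd_below (S x)"
    and add: "\<And>x y a b. x \<in> X \<Longrightarrow> y \<in> X \<Longrightarrow> a \<in> S x \<Longrightarrow> b \<in> S y \<Longrightarrow> \<exists>c\<in>S (x + y). c \<le> a + b"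
    and scale: "\<And>x t a. x \<in> X \<Longrightarrow> t > 0 \<Longrightarrow> a \<in> S x \<Longrightarrow> \<exists>c\<in>S (t *\<^sub>R x). c \<le> t * a"
  shows "sublinear_on X (\<lambda>x. Inf (S x))"
proof -
  have Inf_le: "Inf (S x) \<le> a" if "x \<in> X" "\<exists>c\<in>S x. c \<le> a" for x a
    using that cInf_lower[OF _ bdd[OF \<open>x \<in> X\<close>]] by fastforce
  have scaled: "Inf (S (t *\<^sub>R x)) \<le> t * Inf (S x)" if "x \<in> X" "t > 0" for x t
    using that by (intro le_scaled_cInf nonempty Inf_le scale subspace_scale[OF X])
  have "Inf (S 0) \<le> (1/2) * Inf (S 0)"
    using scaled[OF subspace_0[OF X], of "1/2"] by simp
  then have "Inf (S (t *\<^sub>R x)) \<le> t * Inf (S x)" if "x \<in> X" "t \<ge> 0" for x t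
    using that scaled[of x t] by (cases "t = 0") simp_all
  moreover have "Inf (S (x + y)) \<le> Inf (S x) + Inf (S y)" if "x \<in> X" "y \<in> X" for x y
    using that by (intro le_cInf_add_cInf nonempty Inf_le add subspace_add[OF X])
  ultimately show ?thesis
    unfolding sublinear_on_def by blast
qed

lemma sublinear_on_Inf_ray:
  assumes X: "subspace X" and m: "sublinear_on X m" and y: "y \<in> X"
  defines "S x \<equiv> (\<lambda>t. m (x + t *\<^sub>R y) - t * m y) ` {0..}"
  shows "sublinear_on X (\<lambda>x. Inf (S x))"
    and "x \<in> X \<Longrightarrow> t \<ge> 0 \<Longrightarrow> Inf (S x) \<le> m (x + t *\<^sub>R y) - t * m y"
proof -
  have m_le: "- m (- x) \<le> m (x + t *\<^sub>R y) - t * m y" if "x \<in> X" "t \<ge> 0" for x t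
  proof -
    have "m (t *\<^sub>R y) \<le> m (x + t *\<^sub>R y) + m (- x)"
      using sublinear_on_addD[OF m, of "x + t *\<^sub>R y" "- x"] that X y
      by (simp add: subspace_add subspace_scale subspace_neg)
    then show ?thesis
      using sublinear_on_scaleR[OF X m y \<open>t \<ge> 0\<close>] by simp
  qed
  show "x \<in> X \<Longrightarrow> t \<ge> 0 \<Longrightarrow> Inf (S x) \<le> m (x + t *\<^sub>R y) - t * m y"
    using m_le by (intro cInf_lower) (auto simp: S_def bdd_below_def)
  show "sublinear_on X (\<lambda>x. Inf (S x))"
  proof (rule sublinear_on_Inf[OF X])
    show "bdd_below (S x)" if "x \<in> X" for x
      using m_le[OF that] by (auto simp: S_def bdd_below_def)
    show "\<exists>c\<in>S (x1 + x2). c \<le> a + b"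
      if x: "x1 \<in> X" "x2 \<in> X" and ab: "a \<in> S x1" "b \<in> S x2" for x1 x2 a b
    proof -
      obtain t1 t2 where t: "t1 \<ge> 0" "t2 \<ge> 0"
        and a: "a = m (x1 + t1 *\<^sub>R y) - t1 * m y" and b: "b = m (x2 + t2 *\<^sub>R y) - t2 * m y"
        using ab by (auto simp: S_def)
      have "m ((x1 + x2) + (t1 + t2) *\<^sub>R y) \<le> m (x1 + t1 *\<^sub>R y) + m (x2 + t2 *\<^sub>R y)"
        using sublinear_on_addD[OF m, of "x1 + t1 *\<^sub>R y" "x2 + t2 *\<^sub>R y"] x X y
        by (simp add: subspace_add subspace_scale algebra_simps)
      then show ?thesis
        using t unfolding a b S_def
        by (intro bexI[of _ "m ((x1 + x2) + (t1 + t2) *\<^sub>R y) - (t1 + t2) * m y"]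
            image_eqI[where x = "t1 + t2"]) (auto simp: algebra_simps)
    qed
    show "\<exists>c\<in>S (s *\<^sub>R x). c \<le> s * a" if x: "x \<in> X" and s: "s > 0" and "a \<in> S x" for x s a
    proof -
      obtain t where t: "t \<ge> 0" and a: "a = m (x + t *\<^sub>R y) - t * m y"
        using \<open>a \<in> S x\<close> by (auto simp: S_def)
      have "m (s *\<^sub>R x + (s * t) *\<^sub>R y) = s * m (x + t *\<^sub>R y)"
        using sublinear_on_scaleR[OF X m, of "x + t *\<^sub>R y" s] x s X y
        by (simp add: subspace_add subspace_scale algebra_simps)
      then show ?thesis
        using t \<open>s > 0\<close> unfolding a S_def
        by (intro bexI[of _ "m (s *\<^sub>R x + (s * t) *\<^sub>R y) - (s * t) * m y"]
            image_eqI[where x = "s * t"]) (auto simp: algebra_simps)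
    qed
  qed (auto simp: S_def)
qed

text \<open>The infimum along the ray is below \<open>m\<close> (take \<open>t = 0\<close>), hence equal to it; at \<open>x = - y\<close>,
  \<open>t = 1\<close> it gives \<open>m (- y) \<le> - m y\<close>.\<close>
lemma minimal_sublinear_on_uminus:
  assumes X: "subspace X" and m: "sublinear_on X m"
    and minimal: "\<And>q. sublinear_on X q \<Longrightarrow> \<forall>x\<in>X. q x \<le> m x \<Longrightarrow> \<forall>x\<in>X. q x = m x"
    and y: "y \<in> X"
  shows "m (- y) = - m y"
proof -
  note ray = sublinear_on_Inf_ray[OF X m y]
  have "\<forall>x\<in>X. Inf ((\<lambda>t. m (x + t *\<^sub>R y) - t * m y) ` {0..}) = m x"
    using ray(2)[of _ 0] by (intro minimal ray(1)) auto
  then have "m (- y) = Inf ((\<lambda>t. m (- y + t *\<^sub>R y) - t * m y) ` {0..})"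
    using subspace_neg[OF X y] by metis
  also have "\<dots> \<le> m (- y + 1 *\<^sub>R y) - 1 * m y"
    by (rule ray(2)) (simp_all add: subspace_neg[OF X y])
  also have "\<dots> = - m y"
    by (simp add: sublinear_on_zero[OF X m])
  finally show ?thesis
    using sublinear_on_uminus[OF X m y] by simp
qed

lemma minimal_sublinear_on_linear:
  assumes X: "subspace X" and m: "sublinear_on X m"
    and minimal: "\<And>q. sublinear_on X q \<Longrightarrow> \<forall>x\<in>X. q x \<le> m x \<Longrightarrow> \<forall>x\<in>X. q x = m x"
  shows "\<forall>x\<in>X. \<forall>y\<in>X. m (x + y) = m x + m y" and "\<forall>x\<in>X. \<forall>r. m (r *\<^sub>R x) = r * m x"
proof -
  have uminus: "m (- z) = - m z" if "z \<in> X" for z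
    using minimal_sublinear_on_uminus[OF X m _ that] minimal by blast
  have "m (x + y) = m x + m y" if x: "x \<in> X" and y: "y \<in> X" for x y
  proof -
    have "- m (x + y) = m (- x + - y)"
      using uminus[OF subspace_add[OF X x y]] by (simp add: add.commute)
    also have "\<dots> \<le> - m x - m y"
      using sublinear_on_addD[OF m subspace_neg[OF X x] subspace_neg[OF X y]]
        uminus[OF x] uminus[OF y] by simp
    finally show ?thesis
      using sublinear_on_addD[OF m x y] by simp
  qed
  moreover have "m (r *\<^sub>R x) = r * m x" if x: "x \<in> X" for x r
  proof (cases "r \<ge> 0")
    case False
    then have "m (r *\<^sub>R x) = - m ((- r) *\<^sub>R x)"
      using uminus[OF subspace_scale[OF X x, of "- r"]] by simp
    then show ?thesis
      using False sublinear_on_scaleR[OF X m x, of "- r"] by simp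
  qed (rule sublinear_on_scaleR[OF X m x])
  ultimately show "\<forall>x\<in>X. \<forall>y\<in>X. m (x + y) = m x + m y" and "\<forall>x\<in>X. \<forall>r. m (r *\<^sub>R x) = r * m x"
    by blast+
qed

lemma sublinear_on_Inf_chain:
  assumes X: "subspace X" and p: "sublinear_on X p" and "C \<noteq> {}"
    and C: "\<forall>q\<in>C. sublinear_on X q \<and> (\<forall>x\<in>X. q x \<le> p x)"
    and comparable: "\<forall>q1\<in>C. \<forall>q2\<in>C. (\<forall>x\<in>X. q1 x \<le> q2 x) \<or> (\<forall>x\<in>X. q2 x \<le> q1 x)"
  shows "sublinear_on X (\<lambda>x. Inf ((\<lambda>q. q x) ` C))"
    and "x \<in> X \<Longrightarrow> q \<in> C \<Longrightarrow> Inf ((\<lambda>q. q x) ` C) \<le> q x"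
proof -
  have q_sub: "sublinear_on X q" and q_le: "\<And>x. x \<in> X \<Longrightarrow> q x \<le> p x" if "q \<in> C" for q
    using C that by auto
  have C_le: "- p (- x) \<le> q x" if "q \<in> C" "x \<in> X" for q x
    using q_le[OF that(1) subspace_neg[OF X that(2)]] sublinear_on_uminus[OF X q_sub[OF that(1)] that(2)]
    by linarith
  then show "x \<in> X \<Longrightarrow> q \<in> C \<Longrightarrow> Inf ((\<lambda>q. q x) ` C) \<le> q x"
    by (intro cInf_lower) (auto simp: bdd_below_def)
  show "sublinear_on X (\<lambda>x. Inf ((\<lambda>q. q x) ` C))"
  proof (rule sublinear_on_Inf[OF X])
    show "bdd_below ((\<lambda>q. q x) ` C)" if "x \<in> X" for x
      using C_le that by (auto simp: bdd_below_def)
    show "\<exists>c\<in>(\<lambda>q. q (x + y)) ` C. c \<le> a + b"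
      if xy: "x \<in> X" "y \<in> X" and ab: "a \<in> (\<lambda>q. q x) ` C" "b \<in> (\<lambda>q. q y) ` C" for x y a b
    proof -
      obtain q1 q2 where q: "q1 \<in> C" "q2 \<in> C" and a: "a = q1 x" and b: "b = q2 y"
        using ab by blast
      consider "\<forall>x\<in>X. q1 x \<le> q2 x" | "\<forall>x\<in>X. q2 x \<le> q1 x"
        using comparable q by blast
      then show ?thesis
      proof cases
        case 1
        then have "q1 (x + y) \<le> a + b"
          using sublinear_on_addD[OF q_sub[OF q(1)] xy] xy(2) unfolding a b by fastforce
        then show ?thesis
          using q(1) by blast
      next
        case 2
        then have "q2 (x + y) \<le> a + b"
          using sublinear_on_addD[OF q_sub[OF q(2)] xy] xy(1) unfolding a b by fastforce
        then show ?thesis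
          using q(2) by blast
      qed
    qed
    show "\<exists>c\<in>(\<lambda>q. q (t *\<^sub>R x)) ` C. c \<le> t * a"
      if "x \<in> X" "t > 0" and "a \<in> (\<lambda>q. q x) ` C" for x t a
    proof -
      obtain q where "q \<in> C" "a = q x"
        using \<open>a \<in> (\<lambda>q. q x) ` C\<close> by blast
      then show ?thesis
        using sublinear_on_scaleD[OF q_sub \<open>x \<in> X\<close>, of q t] \<open>t > 0\<close> by force
    qed
  qed (use \<open>C \<noteq> {}\<close> in auto)
qed

text \<open>The Hahn--Banach theorem, via a minimal sublinear functional below \<open>p\<close>; the
  normalisation to \<open>0\<close> outside \<open>X\<close> makes the pointwise order on \<open>A\<close> antisymmetric.\<close>
theorem sublinear_on_dominates_linear:
  assumes X: "subspace X" and p: "sublinear_on X p"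
  shows "\<exists>g. (\<forall>x\<in>X. \<forall>y\<in>X. g (x + y) = g x + g y) \<and> (\<forall>x\<in>X. \<forall>r. g (r *\<^sub>R x) = r * g x)
           \<and> (\<forall>x\<in>X. g x \<le> p x)"
proof -
  define A where "A = {q. sublinear_on X q \<and> (\<forall>x\<in>X. q x \<le> p x) \<and> (\<forall>x. x \<notin> X \<longrightarrow> q x = 0)}"
  define P where "P q1 q2 \<longleftrightarrow> (\<forall>x\<in>X. q2 x \<le> q1 x)" for q1 q2 :: "'a \<Rightarrow> real"
  define restrict where "restrict q x = (if x \<in> X then q x else 0)" for q :: "'a \<Rightarrow> real" and x
  have restrict_A: "restrict q \<in> A" if "sublinear_on X q" "\<forall>x\<in>X. q x \<le> p x" for q
    using that X by (auto simp: A_def restrict_def sublinear_on_def subspace_add subspace_scale)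
  have "partial_order_on A (relation_of P A)"
    unfolding partial_order_on_def preorder_on_def refl_on_def trans_def antisym_def relation_of_def
    by (auto simp: P_def A_def fun_eq_iff intro: order_trans) (metis order_antisym)
  moreover have "\<exists>u\<in>A. \<forall>a\<in>C. P a u" if C: "C \<in> Chains (relation_of P A)" for C
  proof (cases "C = {}")
    case True
    then show ?thesis
      using restrict_A[OF p] by blast
  next
    case False
    have "C \<subseteq> A" and "\<And>a b. a \<in> C \<Longrightarrow> b \<in> C \<Longrightarrow> P a b \<or> P b a"
      using C unfolding Chains_def relation_of_def by auto
    then have "\<forall>q\<in>C. sublinear_on X q \<and> (\<forall>x\<in>X. q x \<le> p x)"
      and "\<forall>q1\<in>C. \<forall>q2\<in>C. (\<forall>x\<in>X. q1 x \<le> q2 x) \<or> (\<forall>x\<in>X. q2 x \<le> q1 x)"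
      unfolding P_def A_def by blast+
    then have "sublinear_on X (\<lambda>x. Inf ((\<lambda>q. q x) ` C))"
      and Inf_le: "\<And>x q. x \<in> X \<Longrightarrow> q \<in> C \<Longrightarrow> Inf ((\<lambda>q. q x) ` C) \<le> q x"
      using sublinear_on_Inf_chain[OF X p False] by blast+
    moreover obtain q0 where "q0 \<in> C"
      using False by blast
    ultimately have "restrict (\<lambda>x. Inf ((\<lambda>q. q x) ` C)) \<in> A"
      using \<open>C \<subseteq> A\<close> by (intro restrict_A) (force simp: A_def)+
    then show ?thesis
      using Inf_le by (intro bexI) (auto simp: P_def restrict_def)
  qed
  ultimately obtain m where mA: "m \<in> A" and max: "\<And>a. a \<in> A \<Longrightarrow> P m a \<Longrightarrow> a = m"
    using predicate_Zorn[of A P] by blast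
  have m: "sublinear_on X m"
    using mA by (simp add: A_def)
  have "\<forall>x\<in>X. q x = m x" if "sublinear_on X q" "\<forall>x\<in>X. q x \<le> m x" for q
  proof -
    have "restrict q = m"
      using that mA by (intro max restrict_A) (force simp: A_def P_def restrict_def)+
    then show ?thesis
      unfolding restrict_def fun_eq_iff by metis
  qed
  then show ?thesis
    using minimal_sublinear_on_linear[OF X m] mA by (auto simp: A_def)
qed

section \<open>Operator systems\<close>

instantiation "fun" :: (type, real_vector) real_vector
begin

definition scaleR_fun :: "real \<Rightarrow> ('a \<Rightarrow> 'b) \<Rightarrow> 'a \<Rightarrow> 'b" where
  "scaleR_fun r f = (\<lambda>x. r *\<^sub>R f x)"

instance
  by standard (simp_all add: scaleR_fun_def fun_eq_iff scaleR_add_right scaleR_add_left)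

end

lemma scaleC_half_sum: "(1/2) *\<^sub>C (a + a) = a"
proof -
  have "(1/2) *\<^sub>C (a + a) = (1/2 + 1/2) *\<^sub>C a"
    by (simp only: scaleC_add_right scaleC_add_left)
  then show ?thesis
    by (simp add: scaleC_one)
qed

lemma scaleC_sum_plus_i_diff: "(1/2) *\<^sub>C (a + b) + \<i> *\<^sub>C ((- \<i>/2) *\<^sub>C (a - b)) = a"
proof -
  have "(1/2) *\<^sub>C (a + b) + \<i> *\<^sub>C ((- \<i>/2) *\<^sub>C (a - b))
      = (1/2) *\<^sub>C a + (1/2) *\<^sub>C b + ((1/2) *\<^sub>C a - (1/2) *\<^sub>C b)"
    by (simp add: scaleC_add_right scaleC_diff_right scaleC_scaleC)
  also have "\<dots> = (1/2 + 1/2) *\<^sub>C a"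
    by (simp only: scaleC_add_left) simp
  finally show ?thesis
    by (simp add: scaleC_one)
qed

lemma scaleC_sum_minus_i_diff: "(1/2) *\<^sub>C (a + b) - \<i> *\<^sub>C ((- \<i>/2) *\<^sub>C (a - b)) = b"
proof -
  have "(1/2) *\<^sub>C (a + b) - \<i> *\<^sub>C ((- \<i>/2) *\<^sub>C (a - b))
      = (1/2) *\<^sub>C a + (1/2) *\<^sub>C b - ((1/2) *\<^sub>C a - (1/2) *\<^sub>C b)"
    by (simp add: scaleC_add_right scaleC_diff_right scaleC_scaleC)
  also have "\<dots> = (1/2 + 1/2) *\<^sub>C b"
    by (simp only: scaleC_add_left) simp
  finally show ?thesis
    by (simp add: scaleC_one)
qed

definition re_part :: "('h::chilbert_space \<Rightarrow> 'h) \<Rightarrow> 'h \<Rightarrow> 'h" where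
  "re_part T = (\<lambda>x. (1/2) *\<^sub>C (T x + cadjoint T x))"

definition im_part :: "('h::chilbert_space \<Rightarrow> 'h) \<Rightarrow> 'h \<Rightarrow> 'h" where
  "im_part T = (\<lambda>x. (- \<i>/2) *\<^sub>C (T x - cadjoint T x))"

locale opsys =
  fixes V :: "('h::chilbert_space \<Rightarrow> 'h) set"
  assumes operator_system: "operator_system V"
begin

lemma V_BH: "T \<in> V \<Longrightarrow> T \<in> BH"
  using operator_system by (auto simp: operator_system_def)

lemma V_add: "S \<in> V \<Longrightarrow> T \<in> V \<Longrightarrow> (\<lambda>x. S x + T x) \<in> V"
  using operator_system by (auto simp: operator_system_def)

lemma V_scaleC: "T \<in> V \<Longrightarrow> (\<lambda>x. c *\<^sub>C T x) \<in> V"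
  using operator_system by (auto simp: operator_system_def)

lemma V_cadjoint: "T \<in> V \<Longrightarrow> cadjoint T \<in> V"
  using operator_system by (auto simp: operator_system_def)

lemma V_id: "(\<lambda>x. x) \<in> V"
  using operator_system by (auto simp: operator_system_def id_def)

lemma V_scaleR: "T \<in> V \<Longrightarrow> (\<lambda>x. r *\<^sub>R T x) \<in> V"
  by (simp add: scaleR_scaleC V_scaleC)

lemma V_minus: "T \<in> V \<Longrightarrow> (\<lambda>x. - T x) \<in> V"
  using V_scaleC[of T "-1"] by (simp add: scaleC_minus_left scaleC_one)

lemma V_diff: "S \<in> V \<Longrightarrow> T \<in> V \<Longrightarrow> (\<lambda>x. S x - T x) \<in> V"
  using V_add[of S "\<lambda>x. - T x"] V_minus[of T] by simp

lemma cinner_cadjoint_V: "T \<in> V \<Longrightarrow> cinner (T x) y = cinner x (cadjoint T y)"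
  by (rule cinner_cadjoint[OF V_BH])

lemma cadjoint_cadjoint: "T \<in> V \<Longrightarrow> cadjoint (cadjoint T) = T"
  by (rule cadjoint_eqI) (metis cinner_cadjoint_V cinner_commute)

lemma cadjoint_add:
  "S \<in> V \<Longrightarrow> T \<in> V \<Longrightarrow> cadjoint (\<lambda>x. S x + T x) = (\<lambda>x. cadjoint S x + cadjoint T x)"
  by (rule cadjoint_eqI) (simp add: cinner_add_left cinner_add_right cinner_cadjoint_V)

lemma cadjoint_diff:
  "S \<in> V \<Longrightarrow> T \<in> V \<Longrightarrow> cadjoint (\<lambda>x. S x - T x) = (\<lambda>x. cadjoint S x - cadjoint T x)"
  by (rule cadjoint_eqI) (simp add: cinner_diff_left cinner_diff_right cinner_cadjoint_V)

lemma cadjoint_scaleC: "T \<in> V \<Longrightarrow> cadjoint (\<lambda>x. c *\<^sub>C T x) = (\<lambda>x. cnj c *\<^sub>C cadjoint T x)"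
  by (rule cadjoint_eqI) (simp add: cinner_scaleC_left cinner_scaleC_right cinner_cadjoint_V)

lemma cadjoint_scaleR: "T \<in> V \<Longrightarrow> cadjoint (\<lambda>x. r *\<^sub>R T x) = (\<lambda>x. r *\<^sub>R cadjoint T x)"
  by (rule cadjoint_eqI) (simp add: cinner_scaleR_left cinner_scaleR_right cinner_cadjoint_V)

lemma hermI: "h \<in> V \<Longrightarrow> cadjoint h = h \<Longrightarrow> h \<in> herm V"
  by (simp add: herm_def)

lemma herm_V: "h \<in> herm V \<Longrightarrow> h \<in> V"
  by (simp add: herm_def)

lemma herm_BH: "h \<in> herm V \<Longrightarrow> h \<in> BH"
  by (simp add: herm_def V_BH)

lemma herm_cadjoint: "h \<in> herm V \<Longrightarrow> cadjoint h = h"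
  by (simp add: herm_def)

lemma herm_symmetric: "h \<in> herm V \<Longrightarrow> cinner (h x) y = cinner x (h y)"
  by (metis cinner_cadjoint_V herm_V herm_cadjoint)

lemma herm_form_real: "h \<in> herm V \<Longrightarrow> Im (cinner x (h x)) = 0"
  using herm_symmetric[of h x x] cinner_commute[of "h x" x] by (metis cnj.sel(2) neg_equal_zero)

lemma herm_add: "a \<in> herm V \<Longrightarrow> b \<in> herm V \<Longrightarrow> (\<lambda>x. a x + b x) \<in> herm V"
  by (simp add: herm_def V_add cadjoint_add)

lemma herm_scaleR: "a \<in> herm V \<Longrightarrow> (\<lambda>x. r *\<^sub>R a x) \<in> herm V"
  by (simp add: herm_def V_scaleR cadjoint_scaleR)

lemma herm_minus: "a \<in> herm V \<Longrightarrow> (\<lambda>x. - a x) \<in> herm V"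
  using herm_scaleR[of a "-1"] by simp

lemma herm_id: "(\<lambda>x. x) \<in> herm V"
  by (simp add: herm_def V_id cadjoint_id)

lemma herm_zero: "(\<lambda>x. 0) \<in> herm V"
  using herm_scaleR[OF herm_id, of 0] by simp

lemma herm_add_scaled_id: "h \<in> herm V \<Longrightarrow> (\<lambda>x. h x + r *\<^sub>R x) \<in> herm V"
  by (intro herm_add herm_scaleR herm_id)

lemma abs_qform_herm_le: "h \<in> herm V \<Longrightarrow> \<bar>qform h u\<bar> \<le> onorm h * (norm u)\<^sup>2"
  by (rule abs_qform_le[OF herm_BH])

lemma onorm_herm_le:
  "h \<in> herm V \<Longrightarrow> a \<ge> 0 \<Longrightarrow> (\<And>u. \<bar>qform h u\<bar> \<le> a * (norm u)\<^sup>2) \<Longrightarrow> onorm h \<le> a"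
  by (rule onorm_le_if_abs_qform_le[OF herm_BH herm_symmetric])

lemma Vpos_iff: "P \<in> Vpos V \<longleftrightarrow> P \<in> herm V \<and> (\<forall>u. 0 \<le> qform P u)"
proof
  assume P: "P \<in> Vpos V"
  then have "P \<in> BH" "\<And>u. Im (cinner u (P u)) = 0"
    by (auto simp: Vpos_def BH_pos_def pos_op_def)
  then have "cadjoint P = P"
    by (intro cadjoint_eqI cinner_symmetric_if_form_real)
  then show "P \<in> herm V \<and> (\<forall>u. 0 \<le> qform P u)"
    using P by (auto simp: Vpos_def BH_pos_def pos_op_def qform_def herm_def)
qed (auto simp: Vpos_def BH_pos_def pos_op_def qform_def herm_V herm_BH herm_form_real)

lemma re_part_herm:
  assumes T: "T \<in> V"
  shows "re_part T \<in> herm V"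
proof (rule hermI)
  show "re_part T \<in> V"
    unfolding re_part_def by (intro V_scaleC V_add V_cadjoint T)
  show "cadjoint (re_part T) = re_part T"
    unfolding re_part_def
    by (simp add: cadjoint_scaleC cadjoint_add V_add V_cadjoint T cadjoint_cadjoint add.commute)
qed

lemma im_part_herm:
  assumes T: "T \<in> V"
  shows "im_part T \<in> herm V"
proof (rule hermI)
  show "im_part T \<in> V"
    unfolding im_part_def by (intro V_scaleC V_diff V_cadjoint T)
  have "cadjoint (im_part T) = (\<lambda>x. cnj (- \<i>/2) *\<^sub>C (cadjoint T x - T x))"
    unfolding im_part_def by (simp only: cadjoint_scaleC cadjoint_diff V_diff V_cadjoint T cadjoint_cadjoint)
  also have "\<dots> = im_part T"
    unfolding im_part_def by (simp add: scaleC_minus_left flip: scaleC_minus_right)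
  finally show "cadjoint (im_part T) = im_part T" .
qed

lemma re_part_plus_im_part: "T = (\<lambda>x. re_part T x + \<i> *\<^sub>C im_part T x)"
  unfolding re_part_def im_part_def by (simp only: scaleC_sum_plus_i_diff)

lemma cadjoint_re_part_im_part: "cadjoint T = (\<lambda>x. re_part T x - \<i> *\<^sub>C im_part T x)"
  unfolding re_part_def im_part_def by (simp only: scaleC_sum_minus_i_diff)

lemma re_part_herm_eq: "h \<in> herm V \<Longrightarrow> re_part h = h"
  by (simp add: re_part_def herm_cadjoint scaleC_half_sum)

lemma im_part_herm_eq: "h \<in> herm V \<Longrightarrow> im_part h = (\<lambda>x. 0)"
  by (simp add: im_part_def herm_cadjoint)

lemma re_part_add:
  "S \<in> V \<Longrightarrow> T \<in> V \<Longrightarrow> re_part (\<lambda>x. S x + T x) = (\<lambda>x. re_part S x + re_part T x)"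
  by (simp add: re_part_def cadjoint_add scaleC_add_right algebra_simps)

lemma im_part_add:
  "S \<in> V \<Longrightarrow> T \<in> V \<Longrightarrow> im_part (\<lambda>x. S x + T x) = (\<lambda>x. im_part S x + im_part T x)"
  by (simp add: im_part_def cadjoint_add scaleC_add_right scaleC_diff_right algebra_simps)

lemma re_part_scaleR: "T \<in> V \<Longrightarrow> re_part (\<lambda>x. r *\<^sub>R T x) = (\<lambda>x. r *\<^sub>R re_part T x)"
  unfolding re_part_def
  by (simp only: cadjoint_scaleR) (simp add: scaleR_scaleC scaleC_add_right scaleC_scaleC mult.commute)

lemma im_part_scaleR: "T \<in> V \<Longrightarrow> im_part (\<lambda>x. r *\<^sub>R T x) = (\<lambda>x. r *\<^sub>R im_part T x)"
  unfolding im_part_def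
  by (simp only: cadjoint_scaleR) (simp add: scaleR_scaleC scaleC_diff_right scaleC_scaleC mult.commute)

lemma re_part_i: "T \<in> V \<Longrightarrow> re_part (\<lambda>x. \<i> *\<^sub>C T x) = (\<lambda>x. - im_part T x)"
  unfolding re_part_def im_part_def
  by (simp only: cadjoint_scaleC)
    (simp add: scaleC_add_right scaleC_diff_right scaleC_scaleC scaleC_minus_left)

lemma im_part_i: "T \<in> V \<Longrightarrow> im_part (\<lambda>x. \<i> *\<^sub>C T x) = re_part T"
  unfolding re_part_def im_part_def
  by (simp only: cadjoint_scaleC)
    (simp add: scaleC_add_right scaleC_diff_right scaleC_scaleC scaleC_minus_left)

lemma onorm_re_part_le:
  assumes T: "T \<in> V"
  shows "onorm (re_part T) \<le> onorm T"
proof (rule onorm_herm_le[OF re_part_herm[OF T] onorm_BH_nonneg[OF V_BH[OF T]]])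
  fix u
  have "cinner u (cadjoint T u) = cnj (cinner u (T u))"
    by (metis T cinner_cadjoint_V cinner_commute)
  then have "qform (re_part T) u = qform T u"
    by (simp add: qform_def re_part_def cinner_scaleC_right cinner_add_right)
  then show "\<bar>qform (re_part T) u\<bar> \<le> onorm T * (norm u)\<^sup>2"
    using abs_qform_le[OF V_BH[OF T]] by simp
qed

lemma lin_func_add: "lin_func V \<phi> \<Longrightarrow> S \<in> V \<Longrightarrow> T \<in> V \<Longrightarrow> \<phi> (\<lambda>x. S x + T x) = \<phi> S + \<phi> T"
  by (simp add: lin_func_def)

lemma lin_func_scaleC: "lin_func V \<phi> \<Longrightarrow> T \<in> V \<Longrightarrow> \<phi> (\<lambda>x. c *\<^sub>C T x) = c * \<phi> T"
  by (simp add: lin_func_def)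

lemma lin_func_outside: "lin_func V \<phi> \<Longrightarrow> T \<notin> V \<Longrightarrow> \<phi> T = 0"
  by (simp add: lin_func_def)

lemma lin_func_scaleR: "lin_func V \<phi> \<Longrightarrow> T \<in> V \<Longrightarrow> \<phi> (\<lambda>x. r *\<^sub>R T x) = complex_of_real r * \<phi> T"
  by (simp add: scaleR_scaleC lin_func_scaleC)

lemma lin_func_zero: "lin_func V \<phi> \<Longrightarrow> \<phi> (\<lambda>x. 0) = 0"
  using lin_func_scaleC[OF _ V_id, of \<phi> 0] by simp

lemma lin_func_minus: "lin_func V \<phi> \<Longrightarrow> T \<in> V \<Longrightarrow> \<phi> (\<lambda>x. - T x) = - \<phi> T"
  using lin_func_scaleR[of \<phi> T "-1"] by simp

lemma lin_func_diff: "lin_func V \<phi> \<Longrightarrow> S \<in> V \<Longrightarrow> T \<in> V \<Longrightarrow> \<phi> (\<lambda>x. S x - T x) = \<phi> S - \<phi> T"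
  using lin_func_add[of \<phi> S "\<lambda>x. - T x"] lin_func_minus[of \<phi> T] V_minus[of T] by simp

lemma lin_func_add_scaled_id:
  "lin_func V \<phi> \<Longrightarrow> T \<in> V \<Longrightarrow> \<phi> (\<lambda>x. T x + r *\<^sub>R x) = \<phi> T + complex_of_real r * \<phi> (\<lambda>x. x)"
  using lin_func_add[OF _ _ V_scaleR[OF V_id]] lin_func_scaleR[OF _ V_id] by simp

lemma lin_func_re_im:
  assumes \<phi>: "lin_func V \<phi>" and T: "T \<in> V"
  shows "\<phi> T = \<phi> (re_part T) + \<i> * \<phi> (im_part T)"
    and "\<phi> (cadjoint T) = \<phi> (re_part T) - \<i> * \<phi> (im_part T)"
proof -
  have re: "re_part T \<in> V" and im: "im_part T \<in> V"
    by (simp_all add: herm_V re_part_herm im_part_herm T)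
  show "\<phi> T = \<phi> (re_part T) + \<i> * \<phi> (im_part T)"
    by (subst re_part_plus_im_part) (simp add: lin_func_add[OF \<phi> re V_scaleC[OF im]] lin_func_scaleC[OF \<phi> im])
  show "\<phi> (cadjoint T) = \<phi> (re_part T) - \<i> * \<phi> (im_part T)"
    by (subst cadjoint_re_part_im_part) (simp add: lin_func_diff[OF \<phi> re V_scaleC[OF im]] lin_func_scaleC[OF \<phi> im])
qed

lemma fstar_eq_iff:
  assumes "lin_func V \<phi>"
  shows "fstar V \<phi> = \<phi> \<longleftrightarrow> (\<forall>h\<in>herm V. Im (\<phi> h) = 0)"
proof
  assume "fstar V \<phi> = \<phi>"
  then have "\<phi> h = cnj (\<phi> h)" if "h \<in> herm V" for h
    using that by (metis fstar_def herm_V herm_cadjoint)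
  then show "\<forall>h\<in>herm V. Im (\<phi> h) = 0"
    by (metis cnj.sel(2) neg_equal_zero)
next
  assume real: "\<forall>h\<in>herm V. Im (\<phi> h) = 0"
  have "cnj (\<phi> (re_part T) - \<i> * \<phi> (im_part T)) = \<phi> (re_part T) + \<i> * \<phi> (im_part T)" if "T \<in> V" for T
    using real re_part_herm[OF that] im_part_herm[OF that] by (simp add: complex_eq_iff)
  then show "fstar V \<phi> = \<phi>"
    using assms by (auto simp: fstar_def fun_eq_iff lin_func_re_im lin_func_outside)
qed

text \<open>Rotating \<open>T\<close> by a phase makes \<open>\<phi> T\<close> real, so that only the real part counts.\<close>
lemma lin_func_norm_le_if_herm:
  assumes \<phi>: "lin_func V \<phi>" and real: "\<And>h. h \<in> herm V \<Longrightarrow> Im (\<phi> h) = 0"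
    and K: "K \<ge> 0" and bound: "\<And>h. h \<in> herm V \<Longrightarrow> \<bar>Re (\<phi> h)\<bar> \<le> K * onorm h"
    and T: "T \<in> V"
  shows "cmod (\<phi> T) \<le> K * onorm T"
proof (cases "\<phi> T = 0")
  case False
  define w where "w = cnj (\<phi> T) / cmod (\<phi> T)"
  define S where "S = (\<lambda>x. w *\<^sub>C T x)"
  have S: "S \<in> V"
    unfolding S_def by (rule V_scaleC[OF T])
  have "\<phi> S = cnj (\<phi> T) * \<phi> T / cmod (\<phi> T)"
    by (simp add: S_def lin_func_scaleC[OF \<phi> T] w_def)
  also have "\<dots> = cmod (\<phi> T)"
    using False by (simp add: complex_norm_square[symmetric] mult.commute power2_eq_square)
  finally have "\<phi> S = cmod (\<phi> T)" .
  then have "cmod (\<phi> T) = Re (\<phi> (re_part S))"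
    using lin_func_re_im[OF \<phi> S] real[OF im_part_herm[OF S]] by (metis Re_complex_of_real
        plus_complex.sel(1) Re_i_times neg_equal_zero add_0_right)
  also have "\<dots> \<le> K * onorm (re_part S)"
    using bound[OF re_part_herm[OF S]] by simp
  also have "\<dots> \<le> K * onorm S"
    by (intro mult_left_mono onorm_re_part_le S K)
  also have "onorm S \<le> cmod w * onorm T"
    unfolding S_def by (rule onorm_scaleC_le[OF V_BH[OF T]])
  finally show ?thesis
    using False K by (simp add: w_def norm_divide mult_left_mono order_trans)
qed (simp add: K onorm_BH_nonneg V_BH T)

text \<open>\<open>\<parallel>h\<parallel> e \<pm> h\<close> are positive.\<close>
lemma positive_lin_func_herm:
  assumes \<phi>: "lin_func V \<phi>" and pos: "\<And>P. P \<in> Vpos V \<Longrightarrow> Im (\<phi> P) = 0 \<and> 0 \<le> Re (\<phi> P)"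
    and h: "h \<in> herm V"
  shows "Im (\<phi> h) = 0" and "\<bar>Re (\<phi> h)\<bar> \<le> Re (\<phi> (\<lambda>x. x)) * onorm h"
proof -
  have e: "Im (\<phi> (\<lambda>x. x)) = 0"
    using pos[of "\<lambda>x. x"] by (simp add: Vpos_iff herm_id qform_id)
  have "(\<lambda>x. s *\<^sub>R h x + onorm h *\<^sub>R x) \<in> Vpos V" if "\<bar>s\<bar> = 1" for s :: real
    unfolding Vpos_iff
  proof (intro conjI allI herm_add_scaled_id herm_scaleR h)
    fix u
    show "0 \<le> qform (\<lambda>x. s *\<^sub>R h x + onorm h *\<^sub>R x) u"
      using abs_qform_herm_le[OF h, of u] that
      by (auto simp: qform_add qform_scaleR qform_id abs_le_iff abs_if split: if_splits)
  qed
  moreover have "\<phi> (\<lambda>x. s *\<^sub>R h x + onorm h *\<^sub>R x) = s * \<phi> h + onorm h * \<phi> (\<lambda>x. x)" for s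
    using lin_func_add_scaled_id[OF \<phi> V_scaleR[OF herm_V[OF h]]] lin_func_scaleR[OF \<phi> herm_V[OF h]]
    by simp
  ultimately have "Im (s * \<phi> h + onorm h * \<phi> (\<lambda>x. x)) = 0 \<and> 0 \<le> Re (s * \<phi> h + onorm h * \<phi> (\<lambda>x. x))"
    if "\<bar>s\<bar> = 1" for s :: real
    using pos that by metis
  from this[of 1] this[of "-1"] show "Im (\<phi> h) = 0" and "\<bar>Re (\<phi> h)\<bar> \<le> Re (\<phi> (\<lambda>x. x)) * onorm h"
    using e by (auto simp: abs_le_iff algebra_simps)
qed

lemma Vpos_id: "(\<lambda>x. x) \<in> Vpos V"
  by (simp add: Vpos_iff herm_id qform_id)

lemma positive_lin_func_norm_le:
  assumes \<phi>: "lin_func V \<phi>" and pos: "\<And>P. P \<in> Vpos V \<Longrightarrow> Im (\<phi> P) = 0 \<and> 0 \<le> Re (\<phi> P)"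
    and T: "T \<in> V"
  shows "cmod (\<phi> T) \<le> Re (\<phi> (\<lambda>x. x)) * onorm T"
  using lin_func_norm_le_if_herm[OF \<phi> positive_lin_func_herm(1)[OF \<phi> pos] _
      positive_lin_func_herm(2)[OF \<phi> pos] T] pos[OF Vpos_id]
  by simp

lemma norm_le_fnorm:
  assumes \<phi>: "\<phi> \<in> dual V" and T: "T \<in> V"
  shows "cmod (\<phi> T) \<le> fnorm V \<phi> * onorm T"
proof (cases "onorm T = 0")
  case True
  then have "T = (\<lambda>x. 0)"
    using onorm_eq_0[OF BH_bounded_linear[OF V_BH[OF T]]] by auto
  then show ?thesis
    using \<phi> by (simp add: dual_def lin_func_zero onorm_zero)
next
  case False
  then have n: "onorm T > 0"
    using onorm_BH_nonneg[OF V_BH[OF T]] by simp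
  obtain K where K: "\<And>v. v \<in> V \<Longrightarrow> cmod (\<phi> v) \<le> K * onorm v"
    using \<phi> by (auto simp: dual_def)
  have "cmod (\<phi> v) \<le> \<bar>K\<bar>" if "v \<in> V" "onorm v \<le> 1" for v
  proof -
    have "cmod (\<phi> v) \<le> \<bar>K\<bar> * onorm v"
      using K[OF that(1)] mult_right_mono[OF abs_ge_self onorm_BH_nonneg[OF V_BH[OF that(1)]]]
      by (rule order_trans)
    also have "\<dots> \<le> \<bar>K\<bar>"
      using mult_left_mono[OF that(2), of "\<bar>K\<bar>"] by simp
    finally show ?thesis .
  qed
  then have bdd: "bdd_above {cmod (\<phi> v) |v. v \<in> V \<and> onorm v \<le> 1}"
    by (intro bdd_aboveI[of _ "\<bar>K\<bar>"]) blast
  define W where "W = (\<lambda>x. (1 / onorm T) *\<^sub>R T x)"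
  have "W \<in> V" "onorm W = 1"
    using n by (simp_all add: W_def V_scaleR T onorm_scaleR[OF BH_bounded_linear[OF V_BH[OF T]]])
  then have "cmod (\<phi> W) \<le> fnorm V \<phi>"
    unfolding fnorm_def using bdd by (intro cSup_upper) auto
  moreover have "\<phi> W = complex_of_real (1 / onorm T) * \<phi> T"
    using \<phi> T by (simp add: W_def lin_func_scaleR dual_def)
  ultimately have "cmod (\<phi> T) / onorm T \<le> fnorm V \<phi>"
    using n by (simp add: norm_mult norm_divide)
  then show ?thesis
    using n by (simp add: field_simps)
qed

lemma fnorm_le:
  assumes "\<And>T. T \<in> V \<Longrightarrow> cmod (\<phi> T) \<le> K * onorm T" and "K \<ge> 0"
  shows "fnorm V \<phi> \<le> K"
  unfolding fnorm_def
proof (rule cSup_least)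
  show "{cmod (\<phi> v) |v. v \<in> V \<and> onorm v \<le> 1} \<noteq> {}"
    using V_scaleR[OF V_id, of 0] by (auto simp: onorm_zero)
next
  fix y
  assume "y \<in> {cmod (\<phi> v) |v. v \<in> V \<and> onorm v \<le> 1}"
  then obtain v where "v \<in> V" "onorm v \<le> 1" "y = cmod (\<phi> v)"
    by blast
  then show "y \<le> K"
    using assms(1)[of v] mult_left_mono[of "onorm v" 1 K] assms(2) by simp
qed

lemma Seps_iff:
  assumes "\<epsilon> \<ge> 0"
  shows "\<phi> \<in> Seps V \<epsilon> \<longleftrightarrow> lin_func V \<phi> \<and> (\<forall>h\<in>herm V. Im (\<phi> h) = 0) \<and> \<phi> (\<lambda>x. x) = 1
           \<and> (\<forall>T\<in>V. cmod (\<phi> T) \<le> \<epsilon> * onorm T)"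
proof
  assume "\<phi> \<in> Seps V \<epsilon>"
  then have "\<phi> \<in> dual V" "fstar V \<phi> = \<phi>" "\<phi> (\<lambda>x. x) = 1" "fnorm V \<phi> \<le> \<epsilon>"
    by (simp_all add: Seps_def id_def)
  moreover have "cmod (\<phi> T) \<le> \<epsilon> * onorm T" if "T \<in> V" for T
    using norm_le_fnorm[OF \<open>\<phi> \<in> dual V\<close> that] \<open>fnorm V \<phi> \<le> \<epsilon>\<close>
      mult_right_mono[OF _ onorm_BH_nonneg[OF V_BH[OF that]]] order_trans by blast
  ultimately show "lin_func V \<phi> \<and> (\<forall>h\<in>herm V. Im (\<phi> h) = 0) \<and> \<phi> (\<lambda>x. x) = 1
      \<and> (\<forall>T\<in>V. cmod (\<phi> T) \<le> \<epsilon> * onorm T)"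
    by (simp add: dual_def fstar_eq_iff)
qed (use assms in \<open>auto simp: Seps_def dual_def fstar_eq_iff id_def intro: fnorm_le\<close>)

section \<open>The cone \<open>V\<^sub>\<epsilon>\<^sup>+\<close> and its states\<close>

lemma Veps_iff:
  "v \<in> Veps V \<epsilon> \<longleftrightarrow> v \<in> herm V \<and> (\<forall>u. onorm v * ((\<epsilon> - 1) / (\<epsilon> + 1)) * (norm u)\<^sup>2 \<le> qform v u)"
proof -
  have "cinner x (v x - (onorm v * ((\<epsilon> - 1) / (\<epsilon> + 1))) *\<^sub>R id x)
      = cinner x (v x) - complex_of_real (onorm v * ((\<epsilon> - 1) / (\<epsilon> + 1)) * (norm x)\<^sup>2)" for x
    by (simp add: cinner_diff_right cinner_scaleR_right cinner_self_norm)
  then show ?thesis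
    unfolding Veps_def op_le_def pos_op_def by (auto simp: qform_def herm_form_real)
qed

lemma Veps_add_scaled_id:
  assumes h: "h \<in> herm V" and \<epsilon>: "\<epsilon> \<ge> 1"
  shows "(\<lambda>x. h x + (\<epsilon> * onorm h) *\<^sub>R x) \<in> Veps V \<epsilon>"
  unfolding Veps_iff
proof (intro conjI allI herm_add_scaled_id h)
  fix u :: 'h
  define n c where "n = onorm h" and "c = (\<epsilon> - 1) / (\<epsilon> + 1)"
  have "n \<ge> 0" "c \<ge> 0"
    using \<epsilon> onorm_BH_nonneg[OF herm_BH[OF h]] by (simp_all add: n_def c_def)
  then have "onorm (\<lambda>x. h x + (\<epsilon> * n) *\<^sub>R x) * c * (norm u)\<^sup>2 \<le> (n + \<epsilon> * n) * c * (norm u)\<^sup>2"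
    using onorm_add_scaled_id_le[OF herm_BH[OF h], of "\<epsilon> * n"] \<epsilon>
    by (intro mult_right_mono) (simp_all add: n_def)
  also have "(n + \<epsilon> * n) * c = n * (\<epsilon> - 1)"
    using \<epsilon> by (simp add: c_def field_simps)
  also have "n * (\<epsilon> - 1) * (norm u)\<^sup>2 \<le> qform (\<lambda>x. h x + (\<epsilon> * n) *\<^sub>R x) u"
    using abs_qform_herm_le[OF h, of u]
    by (simp add: qform_add qform_scaled_id n_def abs_le_iff algebra_simps)
  finally show "onorm (\<lambda>x. h x + (\<epsilon> * onorm h) *\<^sub>R x) * ((\<epsilon> - 1) / (\<epsilon> + 1)) * (norm u)\<^sup>2
      \<le> qform (\<lambda>x. h x + (\<epsilon> * onorm h) *\<^sub>R x) u"
    by (simp add: n_def c_def)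
qed

lemma unital_cone_Veps:
  assumes \<epsilon>: "\<epsilon> \<ge> 1"
  shows "unital_cone V (Veps V \<epsilon>)"
proof -
  define c where "c = (\<epsilon> - 1) / (\<epsilon> + 1)"
  have c: "c \<ge> 0"
    using \<epsilon> by (simp add: c_def)
  have "(\<lambda>x. a x + b x) \<in> Veps V \<epsilon>" if a: "a \<in> Veps V \<epsilon>" and b: "b \<in> Veps V \<epsilon>" for a b
    unfolding Veps_iff
  proof (intro conjI allI herm_add)
    show "a \<in> herm V" "b \<in> herm V"
      using a b by (simp_all add: Veps_iff)
    fix u :: 'h
    have "onorm (\<lambda>x. a x + b x) * ((\<epsilon> - 1) / (\<epsilon> + 1)) * (norm u)\<^sup>2
        \<le> onorm a * c * (norm u)\<^sup>2 + onorm b * c * (norm u)\<^sup>2"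
      using onorm_triangle[OF BH_bounded_linear BH_bounded_linear, of a b] a b c
      by (simp add: Veps_iff herm_BH c_def[symmetric] mult_right_mono flip: distrib_right)
    also have "\<dots> \<le> qform (\<lambda>x. a x + b x) u"
      using a b by (simp add: Veps_iff c_def qform_add add_mono)
    finally show "onorm (\<lambda>x. a x + b x) * ((\<epsilon> - 1) / (\<epsilon> + 1)) * (norm u)\<^sup>2
        \<le> qform (\<lambda>x. a x + b x) u" .
  qed
  moreover have "(\<lambda>x. r *\<^sub>R a x) \<in> Veps V \<epsilon>" if r: "r \<ge> 0" and a: "a \<in> Veps V \<epsilon>" for r a
    unfolding Veps_iff
  proof (intro conjI allI herm_scaleR)
    show "a \<in> herm V"
      using a by (simp add: Veps_iff)
    then show "onorm (\<lambda>x. r *\<^sub>R a x) * ((\<epsilon> - 1) / (\<epsilon> + 1)) * (norm u)\<^sup>2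
        \<le> qform (\<lambda>x. r *\<^sub>R a x) u" for u
      using mult_left_mono[OF Veps_iff[THEN iffD1, OF a, THEN conjunct2, rule_format, of u] r] r
      by (simp add: qform_scaleR onorm_scaleR BH_bounded_linear herm_BH mult.assoc)
  qed
  moreover have "\<exists>r\<ge>0. (\<lambda>x. v x + r *\<^sub>R id x) \<in> Veps V \<epsilon>" if "v \<in> herm V" for v
    using Veps_add_scaled_id[OF that \<epsilon>] \<epsilon> onorm_BH_nonneg[OF herm_BH[OF that]]
    by (intro exI[of _ "\<epsilon> * onorm v"]) simp
  ultimately show ?thesis
    unfolding unital_cone_def is_cone_def by (auto simp: Veps_iff)
qed

lemma exists_nonzero_if_lin_func_id:
  assumes "lin_func V \<phi>" and "\<phi> (\<lambda>x. x) \<noteq> 0"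
  obtains u :: 'h where "u \<noteq> 0"
proof -
  have "(\<lambda>x::'h. x) \<noteq> (\<lambda>x. 0)"
    using assms lin_func_zero by metis
  then show ?thesis
    using that by auto
qed

text \<open>Shifting \<open>h\<close> by the centre of its numerical range leaves an operator of norm at most
  half the range's width.\<close>
lemma Seps_Re_bounds:
  assumes \<phi>: "\<phi> \<in> Seps V \<epsilon>" and \<epsilon>: "\<epsilon> \<ge> 0" and h: "h \<in> herm V"
    and lower: "\<And>u. a * (norm u)\<^sup>2 \<le> qform h u" and upper: "\<And>u. qform h u \<le> b * (norm u)\<^sup>2"
  shows "\<bar>Re (\<phi> h) - (a + b) / 2\<bar> \<le> \<epsilon> * ((b - a) / 2)"
proof -
  have lin: "lin_func V \<phi>" and e: "\<phi> (\<lambda>x. x) = 1"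
    and bound: "\<And>T. T \<in> V \<Longrightarrow> cmod (\<phi> T) \<le> \<epsilon> * onorm T"
    using \<phi> by (simp_all add: Seps_iff[OF \<epsilon>])
  obtain u0 :: 'h where "u0 \<noteq> 0"
    using exists_nonzero_if_lin_func_id[OF lin] e by auto
  then have "a \<le> b"
    using order_trans[OF lower upper, of u0] by simp
  define p where "p = (\<lambda>x. h x + (- (a + b) / 2) *\<^sub>R x)"
  have p: "p \<in> herm V"
    unfolding p_def by (rule herm_add_scaled_id[OF h])
  have "\<bar>qform p u\<bar> \<le> (b - a) / 2 * (norm u)\<^sup>2" for u
    using lower[of u] upper[of u] by (simp add: p_def qform_add qform_scaled_id abs_le_iff field_simps)
  then have "onorm p \<le> (b - a) / 2"
    using \<open>a \<le> b\<close> by (intro onorm_herm_le[OF p]) simp_all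
  moreover have "\<phi> p = \<phi> h - (a + b) / 2"
    using lin_func_add_scaled_id[OF lin herm_V[OF h], of "- (a + b) / 2"] e
    by (simp add: p_def field_simps)
  moreover have "\<bar>Re (\<phi> p)\<bar> \<le> \<epsilon> * onorm p"
    using abs_Re_le_cmod[of "\<phi> p"] bound[OF herm_V[OF p]] by linarith
  ultimately show ?thesis
    using mult_left_mono[OF _ \<epsilon>] by fastforce
qed

lemma states_Veps_subset_Seps:
  assumes \<epsilon>: "\<epsilon> \<ge> 1"
  shows "states V (Veps V \<epsilon>) \<subseteq> Seps V \<epsilon>"
proof
  fix \<phi>
  assume "\<phi> \<in> states V (Veps V \<epsilon>)"
  then have lin: "lin_func V \<phi>" and e: "\<phi> (\<lambda>x. x) = 1"
    and pos: "\<And>v. v \<in> Veps V \<epsilon> \<Longrightarrow> Im (\<phi> v) = 0 \<and> 0 \<le> Re (\<phi> v)"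
    by (simp_all add: states_def id_def)
  have "Im (\<phi> h) = 0 \<and> \<bar>Re (\<phi> h)\<bar> \<le> \<epsilon> * onorm h" if h: "h \<in> herm V" for h
  proof -
    have "Im (s * \<phi> h + \<epsilon> * onorm h) = 0 \<and> 0 \<le> Re (s * \<phi> h + \<epsilon> * onorm h)" if "\<bar>s\<bar> = 1" for s :: real
    proof -
      have "onorm (\<lambda>x. s *\<^sub>R h x) = onorm h"
        using that by (simp add: onorm_scaleR BH_bounded_linear herm_BH h)
      then have "(\<lambda>x. s *\<^sub>R h x + (\<epsilon> * onorm h) *\<^sub>R x) \<in> Veps V \<epsilon>"
        using Veps_add_scaled_id[OF herm_scaleR[OF h, of s] \<epsilon>] by simp
      note pos[OF this]
      then show ?thesis
        using lin_func_add_scaled_id[OF lin V_scaleR[OF herm_V[OF h]]] e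
          lin_func_scaleR[OF lin herm_V[OF h]] by simp
    qed
    from this[of 1] this[of "-1"] show ?thesis
      by (auto simp: abs_le_iff)
  qed
  then show "\<phi> \<in> Seps V \<epsilon>"
    using lin e \<epsilon> lin_func_norm_le_if_herm[OF lin, of \<epsilon>] by (simp add: Seps_iff)
qed

lemma Seps_subset_states_Veps:
  assumes \<epsilon>: "\<epsilon> \<ge> 1"
  shows "Seps V \<epsilon> \<subseteq> states V (Veps V \<epsilon>)"
proof
  fix \<phi>
  assume \<phi>: "\<phi> \<in> Seps V \<epsilon>"
  have "Im (\<phi> v) = 0 \<and> 0 \<le> Re (\<phi> v)" if v: "v \<in> Veps V \<epsilon>" for v
  proof
    define n c where "n = onorm v" and "c = (\<epsilon> - 1) / (\<epsilon> + 1)"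
    have h: "v \<in> herm V" and lower: "\<And>u. c * n * (norm u)\<^sup>2 \<le> qform v u"
      using v by (simp_all add: Veps_iff n_def c_def mult.commute)
    show "Im (\<phi> v) = 0"
      using \<phi> h \<epsilon> by (simp add: Seps_iff)
    have "\<bar>Re (\<phi> v) - (c * n + n) / 2\<bar> \<le> \<epsilon> * ((n - c * n) / 2)"
      using abs_qform_herm_le[OF h] \<epsilon>
      by (intro Seps_Re_bounds[OF \<phi> _ h lower]) (simp_all add: n_def abs_le_iff)
    moreover have "(c * n + n) / 2 - \<epsilon> * ((n - c * n) / 2) = 0"
      using \<epsilon> by (simp add: c_def field_simps)
    ultimately show "0 \<le> Re (\<phi> v)"
      by linarith
  qed
  then show "\<phi> \<in> states V (Veps V \<epsilon>)"
    using \<phi> \<epsilon> by (simp add: Seps_iff states_def id_def)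
qed

lemma Aeps_subset_Seps:
  assumes \<epsilon>: "\<epsilon> \<ge> 1"
  shows "Aeps V \<epsilon> \<subseteq> Seps V \<epsilon>"
proof
  fix \<omega>
  assume "\<omega> \<in> Aeps V \<epsilon>"
  then obtain \<phi> \<psi> s where \<omega>: "\<omega> = (\<lambda>T. complex_of_real (1 + s) * \<phi> T - complex_of_real s * \<psi> T)"
    and \<phi>: "\<phi> \<in> states V (Vpos V)" and \<psi>: "\<psi> \<in> states V (Vpos V)"
    and s: "0 \<le> s" "s \<le> (\<epsilon> - 1) / 2"
    unfolding Aeps_def by blast
  have lin: "lin_func V \<phi>" "lin_func V \<psi>" and e: "\<phi> (\<lambda>x. x) = 1" "\<psi> (\<lambda>x. x) = 1"
    and pos: "\<And>P. P \<in> Vpos V \<Longrightarrow> Im (\<phi> P) = 0 \<and> 0 \<le> Re (\<phi> P)"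
      "\<And>P. P \<in> Vpos V \<Longrightarrow> Im (\<psi> P) = 0 \<and> 0 \<le> Re (\<psi> P)"
    using \<phi> \<psi> by (simp_all add: states_def id_def)
  have "lin_func V \<omega>"
    using lin unfolding \<omega> lin_func_def by (simp add: algebra_simps)
  moreover have "Im (\<omega> h) = 0" if "h \<in> herm V" for h
    using positive_lin_func_herm(1)[OF lin(1) pos(1) that] positive_lin_func_herm(1)[OF lin(2) pos(2) that]
    by (simp add: \<omega>)
  moreover have "cmod (\<omega> T) \<le> \<epsilon> * onorm T" if T: "T \<in> V" for T
  proof -
    have "cmod (\<omega> T) \<le> cmod (complex_of_real (1 + s) * \<phi> T) + cmod (complex_of_real s * \<psi> T)"
      unfolding \<omega> by (rule norm_triangle_ineq4)
    also have "\<dots> = (1 + s) * cmod (\<phi> T) + s * cmod (\<psi> T)"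
      using s by (simp add: norm_mult del: of_real_add)
    also have "\<dots> \<le> (1 + s) * onorm T + s * onorm T"
      using positive_lin_func_norm_le[OF lin(1) pos(1) T] positive_lin_func_norm_le[OF lin(2) pos(2) T] e s
      by (intro add_mono mult_left_mono) simp_all
    also have "\<dots> \<le> \<epsilon> * onorm T"
      using s onorm_BH_nonneg[OF V_BH[OF T]] by (simp add: mult_right_mono flip: distrib_right)
    finally show ?thesis .
  qed
  ultimately show "\<omega> \<in> Seps V \<epsilon>"
    using e \<epsilon> by (simp add: Seps_iff \<omega>)
qed

section \<open>Positive majorants and the decomposition of \<open>S\<^sub>\<epsilon>\<close>\<close>

lemma subspace_herm: "subspace (herm V)"
  unfolding subspace_def zero_fun_def plus_fun_def scaleR_fun_def
  using herm_zero herm_add herm_scaleR by blast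

text \<open>\<open>(t, b) \<in> dominators v\<close> means \<open>0 \<le> b\<close> and \<open>v + b \<le> t e\<close>.\<close>
definition dominators :: "('h \<Rightarrow> 'h) \<Rightarrow> (real \<times> ('h \<Rightarrow> 'h)) set" where
  "dominators v = {(t, b). b \<in> herm V \<and> (\<forall>u. 0 \<le> qform b u) \<and> (\<forall>u. qform v u + qform b u \<le> t * (norm u)\<^sup>2)}"

definition order_gauge :: "(('h \<Rightarrow> 'h) \<Rightarrow> real) \<Rightarrow> real \<Rightarrow> ('h \<Rightarrow> 'h) \<Rightarrow> real" where
  "order_gauge f M v = Inf ((\<lambda>(t, b). M * t - f b) ` dominators v)"

lemma dominators_add:
  assumes "(t1, b1) \<in> dominators v" and "(t2, b2) \<in> dominators w"
  shows "(t1 + t2, \<lambda>x. b1 x + b2 x) \<in> dominators (\<lambda>x. v x + w x)"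
proof -
  have "qform v u + qform b1 u + (qform w u + qform b2 u) \<le> t1 * (norm u)\<^sup>2 + t2 * (norm u)\<^sup>2"
    and "0 \<le> qform b1 u + qform b2 u" for u
    using assms by (auto simp: dominators_def intro!: add_mono add_nonneg_nonneg)
  then show ?thesis
    using assms by (auto simp: dominators_def herm_add qform_add algebra_simps)
qed

lemma dominators_scaleR:
  assumes "(t, b) \<in> dominators v" and "r \<ge> 0"
  shows "(r * t, \<lambda>x. r *\<^sub>R b x) \<in> dominators (\<lambda>x. r *\<^sub>R v x)"
proof -
  have "r * (qform v u + qform b u) \<le> r * (t * (norm u)\<^sup>2)" and "0 \<le> r * qform b u" for u
    using assms by (auto simp: dominators_def intro!: mult_left_mono)
  then show ?thesis
    using assms by (auto simp: dominators_def herm_scaleR qform_scaleR algebra_simps)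
qed

lemma dominators_zero:
  assumes "(t, b) \<in> dominators v" and "v \<in> herm V"
  shows "(t + onorm v, b) \<in> dominators (\<lambda>x. 0)"
proof -
  have "qform b u \<le> (t + onorm v) * (norm u)\<^sup>2" for u
    using assms abs_qform_herm_le[OF \<open>v \<in> herm V\<close>, of u]
    by (auto simp: dominators_def abs_le_iff distrib_right dest!: spec[of _ u])
  then show ?thesis
    using assms by (simp add: dominators_def qform_zero)
qed

lemma onorm_in_dominators: "v \<in> herm V \<Longrightarrow> (onorm v, \<lambda>x. 0) \<in> dominators v"
  using abs_qform_herm_le[of v] by (simp add: dominators_def herm_zero qform_zero abs_le_iff)

lemma order_gauge_bdd_below:
  assumes bounded: "\<And>t b. (t, b) \<in> dominators (\<lambda>x. 0) \<Longrightarrow> f b \<le> M * t" and v: "v \<in> herm V"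
  shows "bdd_below ((\<lambda>(t, b). M * t - f b) ` dominators v)"
proof (rule bdd_belowI)
  fix a
  assume "a \<in> (\<lambda>(t, b). M * t - f b) ` dominators v"
  then show "- M * onorm v \<le> a"
    using bounded[OF dominators_zero[OF _ v]] by (force simp: algebra_simps)
qed

lemma order_gauge_le:
  assumes bounded: "\<And>t b. (t, b) \<in> dominators (\<lambda>x. 0) \<Longrightarrow> f b \<le> M * t"
    and v: "v \<in> herm V" and tb: "(t, b) \<in> dominators v"
  shows "order_gauge f M v \<le> M * t - f b"
  unfolding order_gauge_def using tb by (intro cInf_lower order_gauge_bdd_below[OF bounded v]) force

lemma sublinear_on_order_gauge:
  assumes add: "\<And>a b. a \<in> herm V \<Longrightarrow> b \<in> herm V \<Longrightarrow> f (\<lambda>x. a x + b x) = f a + f b"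
    and scale: "\<And>a r. a \<in> herm V \<Longrightarrow> f (\<lambda>x. r *\<^sub>R a x) = r * f a"
    and bounded: "\<And>t b. (t, b) \<in> dominators (\<lambda>x. 0) \<Longrightarrow> f b \<le> M * t"
  shows "sublinear_on (herm V) (order_gauge f M)"
  unfolding order_gauge_def
proof (rule sublinear_on_Inf[OF subspace_herm])
  show "(\<lambda>(t, b). M * t - f b) ` dominators v \<noteq> {}" if "v \<in> herm V" for v
    using onorm_in_dominators[OF that] by blast
  show "bdd_below ((\<lambda>(t, b). M * t - f b) ` dominators v)" if "v \<in> herm V" for v
    by (rule order_gauge_bdd_below[OF bounded that])
  show "\<exists>c\<in>(\<lambda>(t, b). M * t - f b) ` dominators (v + w). c \<le> a1 + a2"
    if "v \<in> herm V" "w \<in> herm V" and a: "a1 \<in> (\<lambda>(t, b). M * t - f b) ` dominators v"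
      "a2 \<in> (\<lambda>(t, b). M * t - f b) ` dominators w" for v w a1 a2
  proof -
    obtain t1 b1 t2 b2 where tb: "(t1, b1) \<in> dominators v" "(t2, b2) \<in> dominators w"
      and a: "a1 = M * t1 - f b1" "a2 = M * t2 - f b2"
      using a by auto
    have "(t1 + t2, \<lambda>x. b1 x + b2 x) \<in> dominators (v + w)"
      using dominators_add[OF tb] by (simp add: plus_fun_def)
    moreover have "M * (t1 + t2) - f (\<lambda>x. b1 x + b2 x) = a1 + a2"
      using tb add[of b1 b2] by (simp add: dominators_def a algebra_simps)
    ultimately show ?thesis
      by (metis (mono_tags) case_prod_conv image_eqI order_refl)
  qed
  show "\<exists>c\<in>(\<lambda>(t, b). M * t - f b) ` dominators (r *\<^sub>R v). c \<le> r * a"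
    if "v \<in> herm V" "r > 0" and a: "a \<in> (\<lambda>(t, b). M * t - f b) ` dominators v" for v r a
  proof -
    obtain t b where tb: "(t, b) \<in> dominators v" and a: "a = M * t - f b"
      using a by auto
    have "(r * t, \<lambda>x. r *\<^sub>R b x) \<in> dominators (r *\<^sub>R v)"
      using dominators_scaleR[OF tb] \<open>r > 0\<close> by (simp add: scaleR_fun_def)
    moreover have "M * (r * t) - f (\<lambda>x. r *\<^sub>R b x) = r * a"
      using tb scale[of b r] by (simp add: dominators_def a algebra_simps)
    ultimately show ?thesis
      by (metis (mono_tags) case_prod_conv image_eqI order_refl)
  qed
qed

text \<open>A Krein-type extension: the Hahn--Banach theorem applied to \<open>order_gauge f M\<close>.\<close>
lemma positive_majorant_exists:
  assumes add: "\<And>a b. a \<in> herm V \<Longrightarrow> b \<in> herm V \<Longrightarrow> f (\<lambda>x. a x + b x) = f a + f b"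
    and scale: "\<And>a r. a \<in> herm V \<Longrightarrow> f (\<lambda>x. r *\<^sub>R a x) = r * f a"
    and bounded: "\<And>t b. (t, b) \<in> dominators (\<lambda>x. 0) \<Longrightarrow> f b \<le> M * t"
  obtains g where "\<And>a b. a \<in> herm V \<Longrightarrow> b \<in> herm V \<Longrightarrow> g (\<lambda>x. a x + b x) = g a + g b"
    and "\<And>a r. a \<in> herm V \<Longrightarrow> g (\<lambda>x. r *\<^sub>R a x) = r * g a"
    and "g (\<lambda>x. x) = M" and "\<And>P. P \<in> Vpos V \<Longrightarrow> 0 \<le> g P \<and> f P \<le> g P"
proof -
  have "sublinear_on (herm V) (order_gauge f M)"
    by (rule sublinear_on_order_gauge[of f M]) (simp_all add: add scale bounded)
  then obtain g where "\<forall>a\<in>herm V. \<forall>b\<in>herm V. g (a + b) = g a + g b"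
    and "\<forall>a\<in>herm V. \<forall>r. g (r *\<^sub>R a) = r * g a" and g_le: "\<And>v. v \<in> herm V \<Longrightarrow> g v \<le> order_gauge f M v"
    using sublinear_on_dominates_linear[OF subspace_herm] by blast
  then have g_add: "\<And>a b. a \<in> herm V \<Longrightarrow> b \<in> herm V \<Longrightarrow> g (\<lambda>x. a x + b x) = g a + g b"
    and g_scale: "\<And>a r. a \<in> herm V \<Longrightarrow> g (\<lambda>x. r *\<^sub>R a x) = r * g a"
    by (simp_all add: plus_fun_def scaleR_fun_def)
  have gauge_le: "order_gauge f M v \<le> M * t - f b" if "v \<in> herm V" "(t, b) \<in> dominators v" for v t b
    using order_gauge_le[of f M v t b] bounded that by blast
  have f0: "f (\<lambda>x. 0) = 0"
    using scale[OF herm_zero, of 0] by simp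
  have g_minus: "g (\<lambda>x. - a x) = - g a" if "a \<in> herm V" for a
    using g_scale[OF that, of "-1"] by simp
  have "g (\<lambda>x. x) \<le> M"
    using g_le[OF herm_id] gauge_le[OF herm_id, of 1 "\<lambda>x. 0"] f0
    by (simp add: dominators_def herm_zero qform_zero qform_id)
  moreover have "- g (\<lambda>x. x) \<le> - M"
    using g_le[OF herm_minus[OF herm_id]] gauge_le[OF herm_minus[OF herm_id], of "-1" "\<lambda>x. 0"] f0
      g_minus[OF herm_id]
    by (simp add: dominators_def herm_zero qform_zero qform_minus qform_id)
  moreover have "0 \<le> g P \<and> f P \<le> g P" if "P \<in> Vpos V" for P
  proof -
    have P: "P \<in> herm V" "\<And>u. 0 \<le> qform P u"
      using that by (simp_all add: Vpos_iff)
    have "(0, \<lambda>x. 0) \<in> dominators (\<lambda>x. - P x)" "(0, P) \<in> dominators (\<lambda>x. - P x)"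
      using P by (simp_all add: dominators_def herm_zero qform_zero qform_minus)
    then have "g (\<lambda>x. - P x) \<le> M * 0 - f (\<lambda>x. 0)" "g (\<lambda>x. - P x) \<le> M * 0 - f P"
      using g_le herm_minus[OF P(1)] gauge_le[OF herm_minus[OF P(1)]] by (meson order_trans)+
    then show ?thesis
      using g_minus[OF P(1)] f0 by simp
  qed
  ultimately show ?thesis
    using that[of g] g_add g_scale by force
qed

lemma complexification_exists:
  assumes add: "\<And>a b. a \<in> herm V \<Longrightarrow> b \<in> herm V \<Longrightarrow> g (\<lambda>x. a x + b x) = g a + g b"
    and scale: "\<And>a r. a \<in> herm V \<Longrightarrow> g (\<lambda>x. r *\<^sub>R a x) = r * g a"
  obtains G where "lin_func V G" and "\<And>h. h \<in> herm V \<Longrightarrow> G h = complex_of_real (g h)"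
proof
  define G where "G T = (if T \<in> V then complex_of_real (g (re_part T)) + \<i> * complex_of_real (g (im_part T))
    else 0)" for T
  have g_minus: "g (\<lambda>x. - a x) = - g a" if "a \<in> herm V" for a
    using scale[OF that, of "-1"] by simp
  have G_add: "G (\<lambda>x. S x + T x) = G S + G T" if S: "S \<in> V" and T: "T \<in> V" for S T
    using V_add[OF S T]
    by (simp add: G_def S T re_part_add im_part_add add re_part_herm im_part_herm algebra_simps)
  have G_scaleR: "G (\<lambda>x. r *\<^sub>R T x) = complex_of_real r * G T" if T: "T \<in> V" for T r
    using V_scaleR[OF T]
    by (simp add: G_def T re_part_scaleR im_part_scaleR scale re_part_herm im_part_herm algebra_simps)
  have G_i: "G (\<lambda>x. \<i> *\<^sub>C T x) = \<i> * G T" if T: "T \<in> V" for T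
    using V_scaleC[OF T]
    by (simp add: G_def T re_part_i im_part_i g_minus im_part_herm algebra_simps)
  have "G (\<lambda>x. c *\<^sub>C T x) = c * G T" if T: "T \<in> V" for T c
  proof -
    have "c *\<^sub>C v = Re c *\<^sub>R v + Im c *\<^sub>R (\<i> *\<^sub>C v)" for v :: 'h
    proof -
      have "c *\<^sub>C v = (complex_of_real (Re c) + complex_of_real (Im c) * \<i>) *\<^sub>C v"
        by (metis complex_eq mult.commute)
      also have "\<dots> = Re c *\<^sub>R v + Im c *\<^sub>R (\<i> *\<^sub>C v)"
        by (simp only: scaleC_add_left scaleR_scaleC scaleC_scaleC)
      finally show ?thesis .
    qed
    then have "(\<lambda>x. c *\<^sub>C T x) = (\<lambda>x. Re c *\<^sub>R T x + Im c *\<^sub>R (\<i> *\<^sub>C T x))"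
      by simp
    then have "G (\<lambda>x. c *\<^sub>C T x) = complex_of_real (Re c) * G T + complex_of_real (Im c) * (\<i> * G T)"
      using G_add[OF V_scaleR[OF T] V_scaleR[OF V_scaleC[OF T]]] G_scaleR[OF T]
        G_scaleR[OF V_scaleC[OF T]] G_i[OF T] by simp
    also have "\<dots> = c * G T"
      by (simp add: complex_eq_iff algebra_simps)
    finally show ?thesis .
  qed
  then show "lin_func V G"
    unfolding lin_func_def using G_add by (simp add: G_def)
  show "G h = complex_of_real (g h)" if "h \<in> herm V" for h
    using that g_minus[OF herm_zero] by (simp add: G_def herm_V re_part_herm_eq im_part_herm_eq)
qed

lemma scaled_positive_in_states:
  assumes k: "lin_func V k" and pos: "\<And>P. P \<in> Vpos V \<Longrightarrow> Im (k P) = 0 \<and> 0 \<le> Re (k P)"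
    and e: "k (\<lambda>x. x) = complex_of_real c" and c: "c > 0"
  shows "(\<lambda>T. k T / complex_of_real c) \<in> states V (Vpos V)"
  using k pos[of _] e c unfolding states_def lin_func_def
  by (auto simp: id_def Re_divide Im_divide divide_nonneg_pos add_divide_distrib)

lemma Seps_positive_majorant:
  assumes \<phi>: "\<phi> \<in> Seps V \<epsilon>" and \<epsilon>: "\<epsilon> \<ge> 1"
  obtains G where "lin_func V G" and "G (\<lambda>x. x) = (1 + \<epsilon>) / 2"
    and "\<And>P. P \<in> Vpos V \<Longrightarrow> Im (G P) = 0 \<and> 0 \<le> Re (G P)"
    and "\<And>P. P \<in> Vpos V \<Longrightarrow> Im (G P - \<phi> P) = 0 \<and> 0 \<le> Re (G P - \<phi> P)"
proof -
  have lin: "lin_func V \<phi>" and real: "\<And>h. h \<in> herm V \<Longrightarrow> Im (\<phi> h) = 0"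
    using \<phi> \<epsilon> by (simp_all add: Seps_iff)
  have "Re (\<phi> b) \<le> (1 + \<epsilon>) / 2 * t" if "(t, b) \<in> dominators (\<lambda>x. 0)" for t b
    using Seps_Re_bounds[OF \<phi> _ _, of b 0 t] that \<epsilon>
    by (simp add: dominators_def qform_zero abs_le_iff field_simps)
  then obtain g where g_add: "\<And>a b. a \<in> herm V \<Longrightarrow> b \<in> herm V \<Longrightarrow> g (\<lambda>x. a x + b x) = g a + g b"
    and g_scale: "\<And>a r. a \<in> herm V \<Longrightarrow> g (\<lambda>x. r *\<^sub>R a x) = r * g a"
    and g_e: "g (\<lambda>x. x) = (1 + \<epsilon>) / 2"
    and g_pos: "\<And>P. P \<in> Vpos V \<Longrightarrow> 0 \<le> g P \<and> Re (\<phi> P) \<le> g P"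
    using positive_majorant_exists[of "\<lambda>h. Re (\<phi> h)" "(1 + \<epsilon>) / 2"] lin
    by (auto simp: lin_func_add lin_func_scaleR herm_V)
  obtain G where "lin_func V G" and G_herm: "\<And>h. h \<in> herm V \<Longrightarrow> G h = complex_of_real (g h)"
    using complexification_exists[of g] g_add g_scale by blast
  moreover have "G (\<lambda>x. x) = (1 + \<epsilon>) / 2"
    using G_herm[OF herm_id] g_e by simp
  ultimately show ?thesis
    using that g_pos G_herm real by (simp add: Vpos_iff)
qed

lemma Seps_subset_Aeps:
  assumes \<epsilon>: "\<epsilon> \<ge> 1"
  shows "Seps V \<epsilon> \<subseteq> Aeps V \<epsilon>"
proof
  fix \<phi>
  assume \<phi>: "\<phi> \<in> Seps V \<epsilon>"
  then have lin: "lin_func V \<phi>" and e: "\<phi> (\<lambda>x. x) = 1"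
    using \<epsilon> by (simp_all add: Seps_iff)
  obtain G where G: "lin_func V G" and G_e: "G (\<lambda>x. x) = (1 + \<epsilon>) / 2"
    and G_pos: "\<And>P. P \<in> Vpos V \<Longrightarrow> Im (G P) = 0 \<and> 0 \<le> Re (G P)"
    and K_pos: "\<And>P. P \<in> Vpos V \<Longrightarrow> Im (G P - \<phi> P) = 0 \<and> 0 \<le> Re (G P - \<phi> P)"
    using Seps_positive_majorant[OF \<phi> \<epsilon>] by blast
  define s where "s = (\<epsilon> - 1) / 2"
  have s: "s \<ge> 0" and G_e': "G (\<lambda>x. x) = complex_of_real (1 + s)"
    using \<epsilon> G_e by (simp_all add: s_def field_simps)
  have K: "lin_func V (\<lambda>T. G T - \<phi> T)"
    using G lin unfolding lin_func_def by (simp add: algebra_simps)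
  have K_e: "G (\<lambda>x. x) - \<phi> (\<lambda>x. x) = complex_of_real s"
    using G_e' e by simp
  define \<phi>1 where "\<phi>1 T = G T / complex_of_real (1 + s)" for T
  have \<phi>1: "\<phi>1 \<in> states V (Vpos V)"
    unfolding \<phi>1_def using G G_pos G_e' s by (intro scaled_positive_in_states) simp_all
  show "\<phi> \<in> Aeps V \<epsilon>"
  proof (cases "s = 0")
    case True
    text \<open>Then \<open>G - \<phi>\<close> is positive and vanishes at \<open>e\<close>, so it is zero.\<close>
    have "G T - \<phi> T = 0" for T
      using positive_lin_func_norm_le[OF K K_pos, of T] K_e True lin_func_outside[OF K, of T]
      by (cases "T \<in> V") simp_all
    then have "\<phi> = (\<lambda>T. complex_of_real (1 + 0) * \<phi>1 T - complex_of_real 0 * \<phi>1 T)"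
      using True by (simp add: \<phi>1_def fun_eq_iff)
    then show ?thesis
      unfolding Aeps_def using \<phi>1 \<epsilon> by (intro CollectI exI[of _ \<phi>1] exI[of _ 0]) simp
  next
    case False
    define \<phi>2 where "\<phi>2 T = (G T - \<phi> T) / complex_of_real s" for T
    have "\<phi>2 \<in> states V (Vpos V)"
      unfolding \<phi>2_def using K K_pos K_e s False by (intro scaled_positive_in_states) simp_all
    moreover have "complex_of_real (1 + s) * \<phi>1 T = G T" "complex_of_real s * \<phi>2 T = G T - \<phi> T" for T
      using s False by (simp_all add: \<phi>1_def \<phi>2_def del: of_real_add)
    then have "\<phi> = (\<lambda>T. complex_of_real (1 + s) * \<phi>1 T - complex_of_real s * \<phi>2 T)"
      by simp
    ultimately show ?thesis
      unfolding Aeps_def using \<phi>1 s by (intro CollectI exI[of _ \<phi>1] exI[of _ \<phi>2] exI[of _ s])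
        (simp add: s_def)
  qed
qed

end

theorem lemma3p1:
  fixes V :: "('h::chilbert_space \<Rightarrow> 'h) set" and \<epsilon> :: real
  assumes "operator_system V" and "\<epsilon> \<ge> 1"
  shows "unital_cone V (Veps V \<epsilon>) \<and> states V (Veps V \<epsilon>) = Seps V \<epsilon> \<and> Seps V \<epsilon> = Aeps V \<epsilon>"
proof -
  interpret opsys V
    using assms(1) by unfold_locales
  show ?thesis
    using unital_cone_Veps states_Veps_subset_Seps Seps_subset_states_Veps
      Seps_subset_Aeps Aeps_subset_Seps assms(2) by blast
qed

end
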